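(* Let $N\ge1$ and let $f=|0,\dots,N-1|$, $g=|0,\dots,N-2,N|$, $h=|0,\dots,N-2,N+1|$, $s=|0,\dots,N-3,N-1,N|$ be Casoratians of $\boldsymbol\psi$ (see context), as functions of $(n,m,\beta)$. Then (alternative GD-4 (A-2) bilinear form) $$\widetilde f(p\dot f+\dot g)-(p-b)f\widetilde{\dot f}-(b\widetilde f+\widetilde g)\dot f=0,\qquad \widehat f(q\dot f+\dot g)-(q-b)f\widehat{\dot f}-(b\widehat f+\widehat g)\dot f=0,$$ $$\widetilde f(b^2\dot f-b\dot g+\dot h)+p\widetilde f(\dot g-b\dot f)-(p-b)f(\widetilde{\dot g}-b\widetilde{\dot f})-\dot f\widetilde h=0,$$ $$\widehat f(b^2\dot f-b\dot g+\dot h)+q\widehat f(\dot g-b\dot f)-(q-b)f(\widehat{\dot g}-b\widehat{\dot f})-\dot f\widehat h=0,$$ $$\widetilde f(pg+h)-\widetilde g(pf+g)+f\widetilde s=0,\qquad \widehat f(qg+h)-\widehat g(qf+g)+f\widehat s=0,$$ $$(p-q)(\widetilde f\widehat f-f\widehat{\widetilde f})+\widetilde f\widehat g-\widehat f\widetilde g=0,$$ $$\big[H(p,q)f\widehat{\widetilde{\dot f}}+s\widehat{\widetilde{\dot f}}+(p+q-\alpha_3)g\widehat{\widetilde{\dot f}}-((p+q-\alpha_3)f+g)(\widehat{\widetilde{\dot g}}-b\widehat{\widetilde{\dot f}})+f(\widehat{\widetilde{\dot h}}-b\widehat{\widetilde{\dot g}}+b^2\widehat{\widetilde{\dot f}})\big](p-q)-p_b\widetilde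 f\widehat{\dot f}+q_b\widehat f\widetilde{\dot f}=0.$$
   Context: Fix $\alpha_1,\alpha_2,\alpha_3\in\mathbb C$, $G(\omega,k)=\omega^4-k^4+\alpha_3(\omega^3-k^3)+\alpha_2(\omega^2-k^2)+\alpha_1(\omega-k)$, $H(p,q)=p^2+pq+q^2-\alpha_3(p+q)+\alpha_2$. Let $p,q,a,b\in\mathbb C$ be pairwise distinct, $p_b=G(-p,-b)/(p-b)$, $q_b=G(-q,-b)/(q-b)$. Fix $N\ge1$, $k_1,\dots,k_N\in\mathbb C$; for each $s$ let $\omega_1(k_s),\dots,\omega_4(k_s)$ be the four roots in $\omega$ of $G(-\omega,-k_s)=0$, with $\omega_4(k_s)=k_s$. For constants $\rho^{(0)}_{j,s}$ let $\psi_s(n,m,\alpha,\beta,l)=\sum_{j=1}^4\rho^{(0)}_{j,s}(-\omega_j(k_s))^l(p-\omega_j(k_s))^n(q-\omega_j(k_s))^m(a-\omega_j(k_s))^\alpha(b-\omega_j(k_s))^\beta$ and $\boldsymbol\psi(l)=(\psi_1,\dots,\psi_N)^T$. Casoratian notation: $|l_1,\dots,l_N|=\det(\boldsymbol\psi(l_1),\dots,\boldsymbol\psi(l_N))$; a run "$0,\dots,j$" with $j<0$ is empty, and if the listed indices number more than $N$ the symbol is $0$. Shifts: $\widetilde F=F(n+1,m,\beta)$, $\widehat F=F(n,m+1,\beta)$, $\dot F=F(n,m,\beta+1)$, composed as needed. *)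

theory Defs
  imports Complex_Main "Jordan_Normal_Form.Determinant"
begin

definition G :: "complex \<Rightarrow> complex \<Rightarrow> complex \<Rightarrow> complex \<Rightarrow> complex \<Rightarrow> complex" where
  "G \<alpha>1 \<alpha>2 \<alpha>3 w k = w^4 - k^4 + \<alpha>3 * (w^3 - k^3) + \<alpha>2 * (w^2 - k^2) + \<alpha>1 * (w - k)"

definition H :: "complex \<Rightarrow> complex \<Rightarrow> complex \<Rightarrow> complex \<Rightarrow> complex" where
  "H \<alpha>2 \<alpha>3 p q = p^2 + p*q + q^2 - \<alpha>3 * (p + q) + \<alpha>2"

text \<open>psi s (n,m,alpha,beta,l); omega j s = omega_j(k_s), rho j s = rho^(0)_{j,s}, j in 1..4, s in 1..N.\<close>
definition psi :: "(nat \<Rightarrow> nat \<Rightarrow> complex) \<Rightarrow> (nat \<Rightarrow> nat \<Rightarrow> complex) \<Rightarrow>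
    complex \<Rightarrow> complex \<Rightarrow> complex \<Rightarrow> complex \<Rightarrow> nat \<Rightarrow> int \<Rightarrow> int \<Rightarrow> int \<Rightarrow> int \<Rightarrow> nat \<Rightarrow> complex" where
  "psi \<rho> \<omega> p q a b s n m \<alpha> \<beta> l =
     (\<Sum>j\<in>{1..4}. \<rho> j s * (- \<omega> j s) ^ l * (p - \<omega> j s) powi n * (q - \<omega> j s) powi m
        * (a - \<omega> j s) powi \<alpha> * (b - \<omega> j s) powi \<beta>)"

definition casor :: "nat \<Rightarrow> (nat \<Rightarrow> nat \<Rightarrow> complex) \<Rightarrow> (nat \<Rightarrow> nat \<Rightarrow> complex) \<Rightarrow>
    complex \<Rightarrow> complex \<Rightarrow> complex \<Rightarrow> complex \<Rightarrow> int \<Rightarrow> int \<Rightarrow> int \<Rightarrow> int \<Rightarrow> nat list \<Rightarrow> complex" where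
  "casor N \<rho> \<omega> p q a b n m \<alpha> \<beta> ls =
     (if length ls = N
      then det (mat N N (\<lambda>(i, j). psi \<rho> \<omega> p q a b (i + 1) n m \<alpha> \<beta> (ls ! j)))
      else 0)"

end

theory Submission
  imports Defs
begin

(* Each Casoratian of the theorem is a determinant whose columns are P(E) w, where w l is the
   vector (psi_s(l))_s at the base point (n, m, beta), E shifts l, and P is x^l times a product of
   the factors x + p, x + q, x + b that implement the shifts of n, m and beta.  The first seven
   identities hold for an arbitrary sequence w: after unitriangular column operations adapting the
   columns to these factors they are Pluecker relations, as soon as N >= 2.  The last one uses in
   addition that (x + b) Q(x) = G(x, -b) takes the same value at the four points -omega_j(k_s), so
   that multiplication by it merely rescales the rows; after shifting beta it becomes a Pluecker
   relation for N >= 4.  Smaller N are reached by adjoining the row c^l: subtracting c times each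
   column from the next reduces the extended Casoratians to the original ones, and every identity
   is reproduced up to a factor that is a nonzero polynomial in c. *)

section \<open>Determinants of lists of columns\<close>

definition col_det :: "nat \<Rightarrow> (nat \<Rightarrow> 'a) list \<Rightarrow> 'a::comm_ring_1" where
  "col_det N cs = det (mat N N (\<lambda>(i, j). (cs ! j) i))"

lemma col_det_cong:
  assumes "\<And>i j. i < N \<Longrightarrow> j < N \<Longrightarrow> (cs ! j) i = (ds ! j) i"
  shows "col_det N cs = col_det N ds"
  unfolding col_det_def by (rule arg_cong[where f = det], rule eq_matI) (auto simp: assms)

lemma col_det_update_expand:
  assumes "k < N" "k < length cs"
  shows "col_det N (cs[k := v]) = (\<Sum>i<N. v i * cofactor (mat N N (\<lambda>(i, j). (cs ! j) i)) i k)"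
proof -
  have "mat_delete (mat N N (\<lambda>(i, j). (cs[k := v] ! j) i)) i k = mat_delete (mat N N (\<lambda>(i, j). (cs ! j) i)) i k"
    for i unfolding mat_delete_def by (rule eq_matI) auto
  then show ?thesis
    unfolding col_det_def using assms
    by (subst laplace_expansion_column[OF _ assms(1)]) (auto intro!: sum.cong simp: cofactor_def)
qed

lemma col_det_update_linear:
  assumes "k < N" "k < length cs"
  shows "col_det N (cs[k := (\<lambda>i. x * u i + y * v i)]) = x * col_det N (cs[k := u]) + y * col_det N (cs[k := v])"
  unfolding col_det_update_expand[OF assms] by (simp add: sum_distrib_left sum.distrib algebra_simps)

lemma col_det_equal_cols:
  assumes "j1 < N" "j2 < N" "j1 \<noteq> j2" "\<And>i. i < N \<Longrightarrow> (cs ! j1) i = (cs ! j2) i"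
  shows "col_det N cs = 0"
  unfolding col_det_def
  by (rule det_identical_columns[OF _ assms(3,1,2)]) (auto intro!: eq_vecI simp: assms col_def)

lemma col_det_swap:
  assumes "i < N" "j < N" "i \<noteq> j" "length cs = N"
  shows "col_det N (cs[i := cs ! j, j := cs ! i]) = - col_det N cs"
proof -
  have "mat N N (\<lambda>(r, c). (cs[i := cs ! j, j := cs ! i] ! c) r) = swapcols i j (mat N N (\<lambda>(r, c). (cs ! c) r))"
    using assms by (intro eq_matI) auto
  moreover have "det (swapcols i j (mat N N (\<lambda>(r, c). (cs ! c) r))) = - det (mat N N (\<lambda>(r, c). (cs ! c) r))"
    by (rule det_swapcols[OF assms(1-3)]) simp
  ultimately show ?thesis
    unfolding col_det_def by simp
qed

lemma col_det_swap_adjacent: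
  assumes "length L + 2 + length R = N"
  shows "col_det N (L @ [x, y] @ R) = - col_det N (L @ [y, x] @ R)"
proof -
  let ?cs = "L @ [y, x] @ R"
  have "?cs[length L := ?cs ! Suc (length L), Suc (length L) := ?cs ! length L] = L @ [x, y] @ R"
    by (simp add: list_update_append nth_append)
  moreover have "col_det N (?cs[length L := ?cs ! Suc (length L), Suc (length L) := ?cs ! length L]) = - col_det N ?cs"
    by (rule col_det_swap) (use assms in auto)
  ultimately show ?thesis by simp
qed

lemma col_det_move_right:
  assumes "length L + 1 + length B + length R = N"
  shows "col_det N (L @ [x] @ B @ R) = (-1) ^ length B * col_det N (L @ B @ [x] @ R)"
  using assms
proof (induction B arbitrary: L)
  case Nil
  then show ?case by simp
next
  case (Cons b B)
  have "col_det N (L @ [x] @ b # B @ R) = - col_det N (L @ [b, x] @ B @ R)"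
    using col_det_swap_adjacent[of L "B @ R" N x b] Cons.prems by simp
  also have "col_det N (L @ [b, x] @ B @ R) = (-1) ^ length B * col_det N ((L @ [b]) @ B @ [x] @ R)"
    using Cons.IH[of "L @ [b]"] Cons.prems by simp
  finally show ?case by simp
qed

lemma col_det_unitriangular:
  assumes len: "length cs = N" "length ds = N"
    and rel: "\<And>i j. i < N \<Longrightarrow> j < N \<Longrightarrow> (ds ! j) i = (cs ! j) i + (\<Sum>t<j. U t j * (cs ! t) i)"
  shows "col_det N ds = col_det N cs"
proof -
  let ?A = "mat N N (\<lambda>(i, j). (cs ! j) i)"
  let ?U = "mat N N (\<lambda>(t, j). if t = j then 1 else if t < j then U t j else 0)"
  have prod: "mat N N (\<lambda>(i, j). (ds ! j) i) = ?A * ?U"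
  proof (rule eq_matI)
    fix i j assume "i < dim_row (?A * ?U)" "j < dim_col (?A * ?U)"
    then have i: "i < N" and j: "j < N" by auto
    have "(?A * ?U) $$ (i, j) = (\<Sum>t<N. (if t = j then (cs ! t) i else 0) + (if t < j then U t j * (cs ! t) i else 0))"
      using i j by (auto simp: scalar_prod_def atLeast0LessThan intro!: sum.cong)
    also have "\<dots> = (cs ! j) i + (\<Sum>t\<in>{..<N} \<inter> {t. t < j}. U t j * (cs ! t) i)"
      using j by (simp add: sum.distrib sum.If_cases)
    also have "{..<N} \<inter> {t. t < j} = {..<j}" using j by auto
    finally show "mat N N (\<lambda>(i, j). (ds ! j) i) $$ (i, j) = (?A * ?U) $$ (i, j)"
      using i j rel by simp
  qed auto
  have "det ?U = 1"
  proof -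
    have "upper_triangular ?U" unfolding upper_triangular_def by auto
    then have "det ?U = prod_list (diag_mat ?U)" by (rule det_upper_triangular) auto
    also have "diag_mat ?U = replicate N 1" by (rule nth_equalityI) (auto simp: diag_mat_def)
    finally show ?thesis by simp
  qed
  then show ?thesis unfolding col_det_def prod by (subst det_mult[of _ N]) auto
qed

definition delete_at :: "nat \<Rightarrow> 'a list \<Rightarrow> 'a list" where
  "delete_at j xs = take j xs @ drop (Suc j) xs"

lemma nth_delete_at:
  "j < length xs \<Longrightarrow> i < length xs - 1 \<Longrightarrow> delete_at j xs ! i = xs ! (if i < j then i else Suc i)"
  unfolding delete_at_def by (auto simp: nth_append min_def)

lemma delete_at_append_left: "j < length A \<Longrightarrow> delete_at j (A @ B) = delete_at j A @ B"
  unfolding delete_at_def by auto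

lemma delete_at_append_right: "length A \<le> j \<Longrightarrow> delete_at j (A @ B) = A @ delete_at (j - length A) B"
  unfolding delete_at_def by (auto simp: Suc_diff_le)

text \<open>Expansion along the first row of the singular matrix obtained by putting row \<open>r\<close> on top.\<close>
lemma col_det_cramer:
  assumes len: "length cs = Suc N" and r: "r < N"
  shows "(\<Sum>j<Suc N. (-1) ^ j * col_det N (delete_at j cs) * (cs ! j) r) = 0"
proof -
  let ?A = "mat (Suc N) (Suc N) (\<lambda>(i, j). if i = 0 then (cs ! j) r else (cs ! j) (i - 1))"
  have A: "?A \<in> carrier_mat (Suc N) (Suc N)" by auto
  have "(\<Sum>j<Suc N. (-1) ^ j * col_det N (delete_at j cs) * (cs ! j) r) = (\<Sum>j<Suc N. ?A $$ (0, j) * cofactor ?A 0 j)"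
  proof (rule sum.cong)
    fix j assume "j \<in> {..<Suc N}"
    then have j: "j < Suc N" by simp
    have "mat_delete ?A 0 j = mat N N (\<lambda>(i, k). (delete_at j cs ! k) i)"
      unfolding mat_delete_def using j len by (intro eq_matI) (auto simp: nth_delete_at)
    then show "(-1) ^ j * col_det N (delete_at j cs) * (cs ! j) r = ?A $$ (0, j) * cofactor ?A 0 j"
      unfolding cofactor_def col_det_def using j by simp
  qed simp
  also have "\<dots> = det ?A"
    by (rule laplace_expansion_row[OF A, symmetric]) simp
  also have "det ?A = 0"
    by (rule det_identical_rows[OF A, of 0 "Suc r"]) (use r in \<open>auto intro!: eq_vecI\<close>)
  finally show ?thesis .
qed

lemma col_det_plucker:
  assumes lx: "length X + 1 = N" and ly: "length Y = Suc N"
  shows "(\<Sum>j<Suc N. (-1) ^ j * col_det N (delete_at j Y) * col_det N (X @ [Y ! j])) = 0"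
proof -
  let ?k = "length X"
  let ?C = "\<lambda>r. cofactor (mat N N (\<lambda>(i, j). ((X @ [\<lambda>_. 0]) ! j) i)) r ?k"
  have expand: "col_det N (X @ [v]) = (\<Sum>r<N. v r * ?C r)" for v
    using col_det_update_expand[of ?k N "X @ [\<lambda>_. 0]" v] lx by simp
  have "(\<Sum>j<Suc N. (-1) ^ j * col_det N (delete_at j Y) * col_det N (X @ [Y ! j]))
      = (\<Sum>r<N. ?C r * (\<Sum>j<Suc N. (-1) ^ j * col_det N (delete_at j Y) * (Y ! j) r))"
    unfolding expand sum_distrib_left sum_distrib_right
    by (subst sum.swap) (simp add: mult_ac)
  also have "\<dots> = 0"
    by (rule sum.neutral) (auto simp del: sum.lessThan_Suc simp: col_det_cramer[OF ly])
  finally show ?thesis .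
qed

lemma col_det_scale_rows:
  assumes len: "length cs = N"
  shows "col_det N (map (\<lambda>v i. d i * v i) cs) = (\<Prod>i<N. d i) * col_det N cs"
proof -
  let ?A = "mat N N (\<lambda>(i, j). (cs ! j) i)"
  let ?D = "mat N N (\<lambda>(i, j). if i = j then d i else 0)"
  have prod: "mat N N (\<lambda>(i, j). (map (\<lambda>v i. d i * v i) cs ! j) i) = ?D * ?A"
  proof (rule eq_matI)
    fix i j assume "i < dim_row (?D * ?A)" "j < dim_col (?D * ?A)"
    then have i: "i < N" and j: "j < N" by auto
    have "(?D * ?A) $$ (i, j) = (\<Sum>t<N. ?D $$ (i, t) * (cs ! j) t)"
      using i j by (simp add: scalar_prod_def atLeast0LessThan)
    also have "\<dots> = (\<Sum>t<N. if t = i then d i * (cs ! j) t else 0)"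
      by (rule sum.cong) (auto simp: i)
    also have "\<dots> = d i * (cs ! j) i" using i by simp
    finally show "mat N N (\<lambda>(i, j). (map (\<lambda>v i. d i * v i) cs ! j) i) $$ (i, j) = (?D * ?A) $$ (i, j)"
      using i j len by simp
  qed auto
  have "det ?D = (\<Prod>i<N. d i)"
  proof -
    have "upper_triangular ?D" unfolding upper_triangular_def by auto
    then have "det ?D = prod_list (diag_mat ?D)" by (rule det_upper_triangular) auto
    also have "diag_mat ?D = map d [0..<N]" by (rule nth_equalityI) (auto simp: diag_mat_def)
    finally show ?thesis by (simp add: prod.list_conv_set_nth atLeast0LessThan)
  qed
  then show ?thesis unfolding col_det_def prod by (subst det_mult[of _ N]) auto
qed

lemma col_det_last_row:
  assumes len: "length cs = Suc N"
    and zero: "\<And>j. 0 < j \<Longrightarrow> j \<le> N \<Longrightarrow> (cs ! j) N = 0"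
  shows "col_det (Suc N) cs = (-1) ^ N * (cs ! 0) N * col_det N (tl cs)"
proof -
  let ?A = "mat (Suc N) (Suc N) (\<lambda>(i, j). (cs ! j) i)"
  have A: "?A \<in> carrier_mat (Suc N) (Suc N)" by auto
  have "det ?A = (\<Sum>j<Suc N. ?A $$ (N, j) * cofactor ?A N j)"
    by (rule laplace_expansion_row[OF A]) simp
  also have "\<dots> = ?A $$ (N, 0) * cofactor ?A N 0"
    by (subst sum.lessThan_Suc_shift) (auto simp: zero intro!: sum.neutral)
  also have "mat_delete ?A N 0 = mat N N (\<lambda>(i, j). (tl cs ! j) i)"
    unfolding mat_delete_def using len by (intro eq_matI) (auto simp: nth_tl)
  then have "cofactor ?A N 0 = (-1) ^ N * col_det N (tl cs)"
    unfolding cofactor_def col_det_def by simp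
  finally show ?thesis unfolding col_det_def by simp
qed

section \<open>Polynomials acting on sequences of columns\<close>

text \<open>\<open>pcol w P\<close> is the column \<open>(P(E) w) 0\<close>, where \<open>(E w) l = w (l + 1)\<close>.\<close>
definition pcol :: "(nat \<Rightarrow> nat \<Rightarrow> 'a) \<Rightarrow> 'a poly \<Rightarrow> nat \<Rightarrow> 'a::comm_ring_1" where
  "pcol w P i = (\<Sum>k\<le>degree P. coeff P k * w k i)"

definition pdet :: "nat \<Rightarrow> (nat \<Rightarrow> nat \<Rightarrow> 'a) \<Rightarrow> 'a poly list \<Rightarrow> 'a::comm_ring_1" where
  "pdet N w Ps = col_det N (map (pcol w) Ps)"

definition casorati :: "nat \<Rightarrow> (nat \<Rightarrow> nat \<Rightarrow> 'a) \<Rightarrow> 'a poly \<Rightarrow> nat list \<Rightarrow> 'a::comm_ring_1" where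
  "casorati N w D ls = (if length ls = N then pdet N w (map (\<lambda>l. D * monom 1 l) ls) else 0)"

lemma pcol_eq_sum_lessThan:
  assumes "degree P < K"
  shows "pcol w P i = (\<Sum>k<K. coeff P k * w k i)"
proof -
  have "(\<Sum>k<K. coeff P k * w k i) = (\<Sum>k\<le>degree P. coeff P k * w k i)"
    by (rule sum.mono_neutral_right) (use assms in \<open>auto simp: coeff_eq_0\<close>)
  then show ?thesis unfolding pcol_def by simp
qed

lemma pcol_add: "pcol w (P + R) i = pcol w P i + pcol w R i"
proof -
  let ?K = "Suc (max (degree P) (degree R))"
  have "degree (P + R) < ?K" using degree_add_le_max[of P R] by linarith
  then show ?thesis
    by (simp add: pcol_eq_sum_lessThan[of _ ?K] sum.distrib algebra_simps)
qed

lemma pcol_smult: "pcol w (smult c P) i = c * pcol w P i"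
proof -
  have "degree (smult c P) < Suc (degree P)" using degree_smult_le[of c P] by linarith
  then show ?thesis
    by (simp add: pcol_eq_sum_lessThan[of _ "Suc (degree P)"] sum_distrib_left mult.assoc
        del: sum.lessThan_Suc)
qed

lemma pcol_monom: "pcol w (monom c k) i = c * w k i"
proof -
  have "degree (monom c k) < Suc k" by (simp add: degree_monom_le le_imp_less_Suc)
  then have "pcol w (monom c k) i = (\<Sum>j<Suc k. coeff (monom c k) j * w j i)"
    by (rule pcol_eq_sum_lessThan)
  then show ?thesis by (simp add: coeff_monom if_distrib cong: if_cong)
qed

lemma pcol_0 [simp]: "pcol w 0 i = 0"
  by (simp add: pcol_def)

lemma pcol_sum: "finite T \<Longrightarrow> pcol w (\<Sum>t\<in>T. P t) i = (\<Sum>t\<in>T. pcol w (P t) i)"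
  by (induction T rule: finite_induct) (auto simp: pcol_add)

lemma poly_as_sum_of_monoms_lessThan:
  fixes P :: "'a::comm_ring_1 poly"
  assumes "degree P < K"
  shows "P = (\<Sum>t<K. monom (coeff P t) t)"
proof -
  have "P = (\<Sum>t\<le>degree P. monom (coeff P t) t)" by (rule poly_as_sum_of_monoms[symmetric])
  also have "\<dots> = (\<Sum>t<K. monom (coeff P t) t)"
    by (rule sum.mono_neutral_left) (use assms in \<open>auto simp: coeff_eq_0\<close>)
  finally show ?thesis .
qed

lemma mult_monom_eq_smult: "(R :: 'a::comm_ring_1 poly) * monom c t = smult c (R * monom 1 t)"
proof -
  have "monom c t = smult c (monom 1 t)" by (simp add: smult_monom)
  then show ?thesis by (simp only: mult_smult_right)
qed

lemma mult_as_sum_of_monom_multiples: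
  fixes P R :: "'a::comm_ring_1 poly"
  assumes "degree P < K"
  shows "R * P = (\<Sum>t<K. smult (coeff P t) (R * monom 1 t))"
proof -
  have "R * P = (\<Sum>t<K. R * monom (coeff P t) t)"
    by (subst poly_as_sum_of_monoms_lessThan[OF assms]) (simp add: sum_distrib_left)
  also have "\<dots> = (\<Sum>t<K. smult (coeff P t) (R * monom 1 t))"
    by (rule sum.cong[OF refl], rule mult_monom_eq_smult)
  finally show ?thesis .
qed

lemma poly_ext: "(\<And>x. poly P x = poly Q x) \<Longrightarrow> P = (Q :: 'a::{idom,ring_char_0} poly)"
  using poly_eq_poly_eq_iff by blast

lemma degree_smult_monom_less:
  fixes a :: "'a::comm_ring_1"
  assumes "n < m"
  shows "degree (smult a (monom 1 n)) < m"
  using assms degree_smult_le[of a "monom 1 n"] degree_monom_le[of "1::'a" n] by linarith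

lemma pcol_mult_expand:
  assumes "degree P < K"
  shows "pcol w (R * P) i = (\<Sum>t<K. coeff P t * pcol w (R * monom 1 t) i)"
  by (subst mult_as_sum_of_monom_multiples[OF assms]) (simp add: pcol_sum pcol_smult)

lemma pcol_pcol: "pcol (\<lambda>l. pcol w (R * monom 1 l)) P i = pcol w (R * P) i"
proof -
  have d: "degree P < Suc (degree P)" by simp
  show ?thesis unfolding pcol_eq_sum_lessThan[OF d] pcol_mult_expand[OF d] by simp
qed

lemma pdet_unitriangular:
  assumes len: "length Ps = N" "length Qs = N"
    and rel: "\<And>j. j < N \<Longrightarrow> Qs ! j = Ps ! j + (\<Sum>t<j. smult (U t j) (Ps ! t))"
  shows "pdet N w Qs = pdet N w Ps"
  unfolding pdet_def
  by (rule col_det_unitriangular[where U = U]) (simp_all add: len rel pcol_add pcol_sum pcol_smult)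

lemma pdet_linear:
  assumes "length A + 1 + length B = N"
  shows "pdet N w (A @ [P + smult c R] @ B) = pdet N w (A @ [P] @ B) + c * pdet N w (A @ [R] @ B)"
proof -
  let ?cs = "map (pcol w) (A @ [0] @ B)"
  have upd: "map (pcol w) (A @ [X] @ B) = ?cs[length A := pcol w X]" for X
    by (simp add: list_update_append)
  have k: "length A < N" "length A < length ?cs" using assms by auto
  have lin: "pcol w (P + smult c R) = (\<lambda>i. 1 * pcol w P i + c * pcol w R i)"
    by (rule ext) (simp add: pcol_add pcol_smult)
  show ?thesis
    unfolding pdet_def upd[of "P + smult c R"] upd[of P] upd[of R] lin col_det_update_linear[OF k] by simp
qed

lemma pdet_linear_last:
  assumes "length A + 1 = N"
  shows "pdet N w (A @ [P + smult c R]) = pdet N w (A @ [P]) + c * pdet N w (A @ [R])"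
  using pdet_linear[of A "[]" N w P c R] assms by simp

lemma pdet_zero:
  assumes "length A + 1 + length B = N"
  shows "pdet N w (A @ [0] @ B) = 0"
  using pdet_linear[OF assms, of w 0 1 0] by simp

lemma pdet_repeated:
  assumes "length A + 1 + length B = N" "x \<in> set A \<or> x \<in> set B"
  shows "pdet N w (A @ [x] @ B) = 0"
proof -
  obtain j where j: "j < length (A @ [x] @ B)" "j \<noteq> length A" "(A @ [x] @ B) ! j = x"
    using assms(2)
  proof
    assume "x \<in> set A"
    then obtain j where "j < length A" "A ! j = x" by (auto simp: in_set_conv_nth)
    then show ?thesis using that[of j] by (auto simp: nth_append)
  next
    assume "x \<in> set B"
    then obtain j where "j < length B" "B ! j = x" by (auto simp: in_set_conv_nth)
    then show ?thesis using that[of "length A + 1 + j"] by (auto simp: nth_append)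
  qed
  show ?thesis unfolding pdet_def
    by (rule col_det_equal_cols[of j N "length A"]) (use assms j in \<open>auto simp: nth_append\<close>)
qed

lemma pdet_swap_adjacent:
  assumes "length L + 2 + length R = N"
  shows "pdet N w (L @ [x, y] @ R) = - pdet N w (L @ [y, x] @ R)"
  unfolding pdet_def using col_det_swap_adjacent[of "map (pcol w) L" "map (pcol w) R" N "pcol w x" "pcol w y"] assms
  by simp

lemma pdet_move_right:
  assumes "length A + 1 + length B + length R = N"
  shows "pdet N w (A @ [x] @ B @ R) = (-1) ^ length B * pdet N w (A @ B @ [x] @ R)"
  unfolding pdet_def using col_det_move_right[of "map (pcol w) A" "map (pcol w) B" "map (pcol w) R" N "pcol w x"] assms
  by simp

lemma pdet_move_left:
  assumes "length A + 1 + length B + length R = N"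
  shows "pdet N w (A @ B @ [x] @ R) = (-1) ^ length B * pdet N w (A @ [x] @ B @ R)"
  using pdet_move_right[OF assms, of w x] by (simp add: power_mult_distrib[symmetric])

lemma pdet_plucker_relation:
  assumes lx: "length X + 1 = N" and ly: "length Y = Suc N"
  shows "(\<Sum>j<Suc N. (-1) ^ j * pdet N w (delete_at j Y) * pdet N w (X @ [Y ! j])) = 0"
proof -
  have "pdet N w (delete_at j Y) * pdet N w (X @ [Y ! j])
      = col_det N (delete_at j (map (pcol w) Y)) * col_det N (map (pcol w) X @ [map (pcol w) Y ! j])"
    if "j < Suc N" for j
  proof -
    have "map (pcol w) (delete_at j Y) = delete_at j (map (pcol w) Y)"
      unfolding delete_at_def by (simp add: take_map drop_map)
    moreover have "map (pcol w) Y ! j = pcol w (Y ! j)"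
      by (rule nth_map) (use that ly in simp)
    ultimately show ?thesis unfolding pdet_def by simp
  qed
  then have "(\<Sum>j<Suc N. (-1) ^ j * pdet N w (delete_at j Y) * pdet N w (X @ [Y ! j]))
      = (\<Sum>j<Suc N. (-1) ^ j * col_det N (delete_at j (map (pcol w) Y))
          * col_det N (map (pcol w) X @ [map (pcol w) Y ! j]))"
    by (intro sum.cong) (auto simp: mult.assoc)
  also have "\<dots> = 0"
    by (rule col_det_plucker) (use lx ly in auto)
  finally show ?thesis .
qed

text \<open>In the Pluecker relation for \<open>C @ M\<close> and \<open>A @ M @ B\<close>, the terms deleting a column of \<open>M\<close>
  vanish, since that column then occurs twice.\<close>
lemma pdet_plucker:
  assumes lx: "length C + length M + 1 = N" and ly: "length A + length M + length B = Suc N"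
  shows "(\<Sum>j<length A. (-1) ^ j * pdet N w (delete_at j A @ M @ B) * pdet N w (C @ M @ [A ! j]))
       + (\<Sum>j<length B. (-1) ^ (length A + length M + j) * pdet N w (A @ M @ delete_at j B)
            * pdet N w (C @ M @ [B ! j])) = 0"
proof -
  let ?Y = "A @ M @ B" and ?X = "C @ M"
  let ?F = "\<lambda>j. (-1) ^ j * pdet N w (delete_at j ?Y) * pdet N w (?X @ [?Y ! j])"
  have plucker: "(\<Sum>j<Suc N. ?F j) = 0"
    by (rule pdet_plucker_relation) (use lx ly in auto)
  have split: "{..<Suc N} = {..<length A} \<union> ({length A..<length A + length M} \<union> {length A + length M..<Suc N})"
    using ly by auto
  have total: "(\<Sum>j<Suc N. ?F j) = (\<Sum>j<length A. ?F j) + ((\<Sum>j\<in>{length A..<length A + length M}. ?F j)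
      + (\<Sum>j\<in>{length A + length M..<Suc N}. ?F j))"
    unfolding split by (subst sum.union_disjoint, auto, subst sum.union_disjoint, auto)
  have M_part: "(\<Sum>j\<in>{length A..<length A + length M}. ?F j) = 0"
  proof (rule sum.neutral, intro ballI)
    fix j assume "j \<in> {length A..<length A + length M}"
    then have "?Y ! j \<in> set M" by (auto simp: nth_append)
    then have "pdet N w (?X @ [?Y ! j]) = 0"
      using pdet_repeated[of ?X "[]" N "?Y ! j" w] lx by auto
    then show "?F j = 0" by simp
  qed
  have A_part: "(\<Sum>j<length A. ?F j) = (\<Sum>j<length A. (-1) ^ j * pdet N w (delete_at j A @ M @ B) * pdet N w (C @ M @ [A ! j]))"
    by (rule sum.cong) (auto simp: delete_at_append_left nth_append)
  have B_part: "(\<Sum>j\<in>{length A + length M..<Suc N}. ?F j) =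
      (\<Sum>j<length B. (-1) ^ (length A + length M + j) * pdet N w (A @ M @ delete_at j B) * pdet N w (C @ M @ [B ! j]))"
  proof -
    have "length B + (length A + length M) = Suc N" using ly by simp
    then have "{length A + length M..<Suc N} = {0 + (length A + length M)..<length B + (length A + length M)}"
      by simp
    then have "(\<Sum>j\<in>{length A + length M..<Suc N}. ?F j) = (\<Sum>j<length B. ?F (j + (length A + length M)))"
      by (simp only: sum.shift_bounds_nat_ivl atLeast0LessThan)
    then show ?thesis
      by (simp add: delete_at_append_right nth_append add.commute)
  qed
  show ?thesis using total[unfolded plucker M_part A_part B_part] by simp
qed

definition monic_deg :: "'a::comm_ring_1 poly \<Rightarrow> nat \<Rightarrow> bool" where
  "monic_deg P k \<longleftrightarrow> degree P = k \<and> coeff P k = 1"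

lemma monic_deg_monom: "monic_deg (monom 1 k) k"
  unfolding monic_deg_def by (simp add: degree_monom_eq)

lemma monic_deg_1: "monic_deg 1 0"
  unfolding monic_deg_def by simp

lemma monic_deg_mult:
  assumes "monic_deg P a" "monic_deg Q b"
  shows "monic_deg (P * Q) (a + b)"
proof -
  have c: "coeff (P * Q) (a + b) = 1"
    using coeff_mult_degree_sum[of P Q] assms unfolding monic_deg_def by simp
  then have "degree (P * Q) \<ge> a + b" by (metis le_degree zero_neq_one)
  moreover have "degree (P * Q) \<le> a + b" using degree_mult_le[of P Q] assms unfolding monic_deg_def by simp
  ultimately show ?thesis unfolding monic_deg_def using c by simp
qed

lemma pdet_monic_basis:
  assumes m: "\<And>k. k < K \<Longrightarrow> monic_deg (m k) k" and len: "K + length B = N"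
  shows "pdet N w (map (\<lambda>k. R * m k) [0..<K] @ B) = pdet N w (map (\<lambda>k. R * monom 1 k) [0..<K] @ B)"
proof (rule pdet_unitriangular[where U = "\<lambda>t j. if j < K then coeff (m j) t else 0"])
  fix j assume j: "j < N"
  show "(map (\<lambda>k. R * m k) [0..<K] @ B) ! j = (map (\<lambda>k. R * monom 1 k) [0..<K] @ B) ! j +
      (\<Sum>t<j. smult (if j < K then coeff (m j) t else 0) ((map (\<lambda>k. R * monom 1 k) [0..<K] @ B) ! t))"
  proof (cases "j < K")
    case True
    have "R * m j = (\<Sum>t<Suc j. smult (coeff (m j) t) (R * monom 1 t))"
      using m[OF True] unfolding monic_deg_def by (intro mult_as_sum_of_monom_multiples) simp
    also have "\<dots> = R * monom 1 j + (\<Sum>t<j. smult (coeff (m j) t) (R * monom 1 t))"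
      using m[OF True] unfolding monic_deg_def by (simp add: add.commute)
    finally show ?thesis
      using True by (simp add: nth_append)
  qed (simp add: nth_append)
qed (use len in auto)

definition monom_multiples :: "'a::comm_ring_1 poly \<Rightarrow> nat \<Rightarrow> 'a poly list" where
  "monom_multiples D K = map (\<lambda>k. D * monom 1 k) [0..<K]"

lemma length_monom_multiples [simp]: "length (monom_multiples D K) = K"
  by (simp add: monom_multiples_def)

lemma monom_multiples_add:
  "monom_multiples D (K + n) = monom_multiples D K @ map (\<lambda>i. D * monom 1 (K + i)) [0..<n]"
  by (induction n) (simp_all add: monom_multiples_def)

lemma pdet_reduce_column:
  assumes "degree r < K" and len: "K + length A + 1 + length B = N"
  shows "pdet N w (monom_multiples R K @ A @ [y + R * r] @ B) = pdet N w (monom_multiples R K @ A @ [y] @ B)"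
  unfolding monom_multiples_def
proof (rule pdet_unitriangular[where U = "\<lambda>t j. if j = K + length A \<and> t < K then coeff r t else 0"])
  fix j assume j: "j < N"
  let ?Ps = "map (\<lambda>k. R * monom 1 k) [0..<K] @ A @ [y] @ B"
  show "(map (\<lambda>k. R * monom 1 k) [0..<K] @ A @ [y + R * r] @ B) ! j = ?Ps ! j +
      (\<Sum>t<j. smult (if j = K + length A \<and> t < K then coeff r t else 0) (?Ps ! t))"
  proof (cases "j = K + length A")
    case True
    have "R * r = (\<Sum>t<K. smult (coeff r t) (?Ps ! t))"
      unfolding mult_as_sum_of_monom_multiples[OF assms(1)] by (rule sum.cong) (auto simp: nth_append)
    also have "\<dots> = (\<Sum>t<j. smult (if j = K + length A \<and> t < K then coeff r t else 0) (?Ps ! t))"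
      using True by (intro sum.mono_neutral_cong_left) auto
    finally show ?thesis using True by (simp add: nth_append)
  qed (auto simp: nth_append intro!: sum.neutral)
qed (use len in auto)

lemma pdet_factor_basis:
  assumes lc: "length Cs = j" and jK: "j \<le> K" and mc: "\<And>i. i < j \<Longrightarrow> monic_deg (Cs ! i) i"
    and mE: "monic_deg E j" and len: "K + length B = N"
  shows "pdet N w (monom_multiples D K @ B) = pdet N w (map (\<lambda>c. D * c) Cs @ monom_multiples (D * E) (K - j) @ B)"
proof -
  define m where "m = (\<lambda>k. if k < j then Cs ! k else E * monom 1 (k - j))"
  have "monic_deg (m k) k" if "k < K" for k
    using mc monic_deg_mult[OF mE monic_deg_monom, of "k - j"] by (cases "k < j") (auto simp: m_def)
  then have "pdet N w (monom_multiples D K @ B) = pdet N w (map (\<lambda>k. D * m k) [0..<K] @ B)"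
    unfolding monom_multiples_def using pdet_monic_basis[OF _ len] by metis
  also have "map (\<lambda>k. D * m k) [0..<K] = map (\<lambda>k. D * m k) [0..<j] @ map (\<lambda>k. D * m k) [j..<K]"
    using upt_add_eq_append[of 0 j "K - j"] jK by simp
  also have "map (\<lambda>k. D * m k) [0..<j] = map (\<lambda>c. D * c) Cs"
    using lc by (intro nth_equalityI) (auto simp: m_def)
  also have "map (\<lambda>k. D * m k) [j..<K] = map (\<lambda>k. (D * E) * monom 1 k) [0..<K - j]"
    using jK by (intro nth_equalityI) (auto simp: m_def mult.assoc)
  finally show ?thesis by (simp add: monom_multiples_def)
qed

lemma casorati_upt: "casorati N w D [0..<N] = pdet N w (monom_multiples D N)"
  unfolding casorati_def monom_multiples_def by simp

lemma casorati_reduce_last: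
  assumes "D * monom 1 l = y + D * r" "degree r < K" "K + 1 = N"
  shows "casorati N w D ([0..<K] @ [l]) = pdet N w (monom_multiples D K @ [y])"
proof -
  have "casorati N w D ([0..<K] @ [l]) = pdet N w (monom_multiples D K @ [] @ [y + D * r] @ [])"
    unfolding casorati_def monom_multiples_def using assms(1,3) by auto
  also have "\<dots> = pdet N w (monom_multiples D K @ [] @ [y] @ [])"
    by (rule pdet_reduce_column[OF assms(2)]) (use assms(3) in simp)
  finally show ?thesis by simp
qed

lemma casorati_pcol_shift: "casorati N (\<lambda>l. pcol w (R * monom 1 l)) D ls = casorati N w (R * D) ls"
  unfolding casorati_def pdet_def
  by (auto simp: pcol_pcol mult.assoc intro!: col_det_cong)

lemma casorati_scale_rows:
  assumes "\<And>i P. i < N \<Longrightarrow> pcol w (R * P) i = d i * pcol w P i"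
  shows "casorati N w (R * D) ls = (\<Prod>i<N. d i) * casorati N w D ls"
proof (cases "length ls = N")
  case True
  have "col_det N (map (pcol w) (map (\<lambda>l. R * D * monom 1 l) ls))
      = col_det N (map (\<lambda>v i. d i * v i) (map (pcol w) (map (\<lambda>l. D * monom 1 l) ls)))"
  proof (rule col_det_cong)
    fix i j assume "i < N" "j < N"
    then show "(map (pcol w) (map (\<lambda>l. R * D * monom 1 l) ls) ! j) i
        = (map (\<lambda>v i. d i * v i) (map (pcol w) (map (\<lambda>l. D * monom 1 l) ls)) ! j) i"
      using True assms[of i "D * monom 1 (ls ! j)"] by (simp add: mult.assoc)
  qed
  also have "\<dots> = (\<Prod>i<N. d i) * col_det N (map (pcol w) (map (\<lambda>l. D * monom 1 l) ls))"
    by (rule col_det_scale_rows) (simp add: True)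
  finally show ?thesis
    unfolding casorati_def pdet_def using True by simp
qed (simp add: casorati_def)

section \<open>The Casoratians \<open>f\<close>, \<open>g\<close>, \<open>h\<close>, \<open>s\<close> and the Pluecker identities\<close>

definition lin :: "'a::comm_ring_1 \<Rightarrow> 'a poly" where
  "lin c = [:c, 1:]"

lemma poly_lin [simp]: "poly (lin c) x = c + x"
  by (simp add: lin_def)

lemma lin_nonzero [simp]: "lin c \<noteq> 0"
  by (simp add: lin_def)

lemma monic_deg_lin: "monic_deg (lin c) (Suc 0)"
  by (simp add: lin_def monic_deg_def)

lemma monic_deg_lin_lin: "monic_deg (lin u * lin v) 2"
  using monic_deg_mult[OF monic_deg_lin monic_deg_lin, of u v] by (simp add: numeral_2_eq_2)

lemma monic_deg_nth_1_lin: "i < 2 \<Longrightarrow> monic_deg ([1, lin u] ! i) i"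
  using monic_deg_1 monic_deg_lin by (auto simp: less_2_cases_iff)

definition casorati_f :: "nat \<Rightarrow> (nat \<Rightarrow> nat \<Rightarrow> 'a) \<Rightarrow> 'a poly \<Rightarrow> 'a::comm_ring_1" where
  "casorati_f N w D = casorati N w D [0..<N]"

definition casorati_g :: "nat \<Rightarrow> (nat \<Rightarrow> nat \<Rightarrow> 'a) \<Rightarrow> 'a poly \<Rightarrow> 'a::comm_ring_1" where
  "casorati_g N w D = casorati N w D ([0..<N - 1] @ [N])"

definition casorati_h :: "nat \<Rightarrow> (nat \<Rightarrow> nat \<Rightarrow> 'a) \<Rightarrow> 'a poly \<Rightarrow> 'a::comm_ring_1" where
  "casorati_h N w D = casorati N w D ([0..<N - 1] @ [N + 1])"

definition casorati_s :: "nat \<Rightarrow> (nat \<Rightarrow> nat \<Rightarrow> 'a) \<Rightarrow> 'a poly \<Rightarrow> 'a::comm_ring_1" where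
  "casorati_s N w D = casorati N w D ([0..<N - 2] @ [N - 1, N])"

definition bilinear_f :: "nat \<Rightarrow> (nat \<Rightarrow> nat \<Rightarrow> 'a) \<Rightarrow> 'a \<Rightarrow> 'a \<Rightarrow> 'a::comm_ring_1" where
  "bilinear_f N w u v =
     (u - v) * (casorati_f N w (lin u) * casorati_f N w (lin v) - casorati_f N w 1 * casorati_f N w (lin u * lin v))
     + casorati_f N w (lin u) * casorati_g N w (lin v) - casorati_f N w (lin v) * casorati_g N w (lin u)"

definition bilinear_h :: "nat \<Rightarrow> (nat \<Rightarrow> nat \<Rightarrow> 'a) \<Rightarrow> 'a \<Rightarrow> 'a \<Rightarrow> 'a::comm_ring_1" where
  "bilinear_h N w u v =
     casorati_f N w (lin u) * (v\<^sup>2 * casorati_f N w (lin v) - v * casorati_g N w (lin v) + casorati_h N w (lin v))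
     + u * casorati_f N w (lin u) * (casorati_g N w (lin v) - v * casorati_f N w (lin v))
     - (u - v) * casorati_f N w 1 * (casorati_g N w (lin u * lin v) - v * casorati_f N w (lin u * lin v))
     - casorati_f N w (lin v) * casorati_h N w (lin u)"

context
  fixes w :: "nat \<Rightarrow> nat \<Rightarrow> 'a::{idom,ring_char_0}" and D :: "'a poly" and v :: 'a and K :: nat
begin

lemma pdet_lin_basis:
  assumes "length B = 1"
  shows "pdet (K + 2) w (monom_multiples D (K + 1) @ B)
       = pdet (K + 2) w ([D] @ monom_multiples (D * lin v) K @ B)"
  using pdet_factor_basis[of "[1]" 1 "K + 1" "lin v" B "K + 2" w D] assms
  by (simp add: monic_deg_1 monic_deg_lin)

lemma casorati_f_lin_basis:
  "casorati_f (K + 2) w D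
     = pdet (K + 2) w ([D] @ monom_multiples (D * lin v) K @ [D * lin v * monom 1 K])"
proof -
  have "casorati_f (K + 2) w D = casorati (K + 2) w D ([0..<K + 1] @ [K + 1])"
    unfolding casorati_f_def by simp
  also have "\<dots> = pdet (K + 2) w (monom_multiples D (K + 1) @ [D * lin v * monom 1 K])"
    by (rule casorati_reduce_last[where r = "smult (- v) (monom 1 K)"])
      (auto intro: poly_ext simp: poly_monom algebra_simps degree_monom_le le_imp_less_Suc)
  also have "\<dots> = pdet (K + 2) w ([D] @ monom_multiples (D * lin v) K @ [D * lin v * monom 1 K])"
    by (rule pdet_lin_basis) simp
  finally show ?thesis .
qed

lemma casorati_g_lin_basis:
  "casorati_g (K + 2) w D
     = pdet (K + 2) w ([D] @ monom_multiples (D * lin v) K @ [D * lin v * monom 1 (K + 1)])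
       - v * pdet (K + 2) w ([D] @ monom_multiples (D * lin v) K @ [D * lin v * monom 1 K])"
proof -
  let ?T = "\<lambda>i. D * lin v * monom 1 (K + i)"
  have "casorati_g (K + 2) w D = casorati (K + 2) w D ([0..<K + 1] @ [K + 2])"
    unfolding casorati_g_def by simp
  also have "\<dots> = pdet (K + 2) w (monom_multiples D (K + 1) @ [?T 1 + smult (- v) (?T 0)])"
    by (rule casorati_reduce_last[where r = "smult (v\<^sup>2) (monom 1 K)"])
      (auto intro: poly_ext simp: poly_monom algebra_simps power2_eq_square degree_monom_le le_imp_less_Suc)
  also have "\<dots> = pdet (K + 2) w ([D] @ monom_multiples (D * lin v) K @ [?T 1 + smult (- v) (?T 0)])"
    by (rule pdet_lin_basis) simp
  also have "\<dots> = pdet (K + 2) w (([D] @ monom_multiples (D * lin v) K) @ [?T 1 + smult (- v) (?T 0)])"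
    by simp
  also have "\<dots> = pdet (K + 2) w (([D] @ monom_multiples (D * lin v) K) @ [?T 1])
      + (- v) * pdet (K + 2) w (([D] @ monom_multiples (D * lin v) K) @ [?T 0])"
    by (rule pdet_linear_last) simp
  finally show ?thesis by simp
qed

lemma casorati_h_lin_basis:
  "casorati_h (K + 2) w D
     = pdet (K + 2) w ([D] @ monom_multiples (D * lin v) K @ [D * lin v * monom 1 (K + 2)])
       - v * pdet (K + 2) w ([D] @ monom_multiples (D * lin v) K @ [D * lin v * monom 1 (K + 1)])
       + v\<^sup>2 * pdet (K + 2) w ([D] @ monom_multiples (D * lin v) K @ [D * lin v * monom 1 K])"
proof -
  let ?T = "\<lambda>i. D * lin v * monom 1 (K + i)"
  let ?B = "[D] @ monom_multiples (D * lin v) K"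
  have "casorati_h (K + 2) w D = casorati (K + 2) w D ([0..<K + 1] @ [K + 3])"
    unfolding casorati_h_def by (simp add: numeral_3_eq_3)
  also have "\<dots> = pdet (K + 2) w (monom_multiples D (K + 1) @ [(?T 2 + smult (- v) (?T 1)) + smult (v\<^sup>2) (?T 0)])"
  proof (rule casorati_reduce_last)
    show "D * monom 1 (K + 3)
        = ((?T 2 + smult (- v) (?T 1)) + smult (v\<^sup>2) (?T 0)) + D * smult (- (v ^ 3)) (monom 1 K)"
      by (rule poly_ext) (simp add: poly_monom algebra_simps power2_eq_square power3_eq_cube power_add)
  qed (simp_all add: degree_monom_le le_imp_less_Suc)
  also have "\<dots> = pdet (K + 2) w ([D] @ monom_multiples (D * lin v) K @ [(?T 2 + smult (- v) (?T 1)) + smult (v\<^sup>2) (?T 0)])"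
    by (rule pdet_lin_basis) simp
  also have "\<dots> = pdet (K + 2) w (?B @ [(?T 2 + smult (- v) (?T 1)) + smult (v\<^sup>2) (?T 0)])"
    by simp
  also have "\<dots> = pdet (K + 2) w (?B @ [?T 2 + smult (- v) (?T 1)]) + v\<^sup>2 * pdet (K + 2) w (?B @ [?T 0])"
    by (rule pdet_linear_last) simp
  also have "pdet (K + 2) w (?B @ [?T 2 + smult (- v) (?T 1)]) = pdet (K + 2) w (?B @ [?T 2]) + (- v) * pdet (K + 2) w (?B @ [?T 1])"
    by (rule pdet_linear_last) simp
  finally show ?thesis by simp
qed

lemma casorati_f_expand:
  "casorati_f (K + 2) w D = pdet (K + 2) w (monom_multiples D K @ [D * monom 1 K, D * monom 1 (K + 1)])"
  by (simp add: casorati_f_def casorati_def monom_multiples_def)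

lemma casorati_g_expand:
  "casorati_g (K + 2) w D = pdet (K + 2) w (monom_multiples D K @ [D * monom 1 K, D * monom 1 (K + 2)])"
  by (simp add: casorati_g_def casorati_def monom_multiples_def)

lemma casorati_s_expand:
  "casorati_s (K + 2) w D = pdet (K + 2) w (monom_multiples D K @ [D * monom 1 (K + 1), D * monom 1 (K + 2)])"
  by (simp add: casorati_s_def casorati_def monom_multiples_def)

end

context
  fixes w :: "nat \<Rightarrow> nat \<Rightarrow> 'a::{idom,ring_char_0}" and u v :: 'a and K :: nat
begin

lemma casorati_f_1:
  "casorati_f (K + 2) w 1 = pdet (K + 2) w ([1, lin u] @ monom_multiples (lin u * lin v) K)"
  unfolding casorati_f_def casorati_upt
  using pdet_factor_basis[of "[1, lin u]" 2 "K + 2" "lin u * lin v" "[]" "K + 2" w 1]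
  by (simp add: monic_deg_nth_1_lin monic_deg_lin_lin)

lemma pdet_lin_lin:
  "pdet (K + 2) w ([lin u] @ monom_multiples (lin u * lin v) K @ [lin v])
     = (-1) ^ K * (u - v) * pdet (K + 2) w ([1, lin u] @ monom_multiples (lin u * lin v) K)"
proof -
  let ?M = "monom_multiples (lin u * lin v) K"
  have "pdet (K + 2) w ([lin u] @ ?M @ [lin v]) = (-1) ^ K * pdet (K + 2) w ([lin u] @ [lin u + smult (v - u) 1] @ ?M)"
    using pdet_move_left[of "[lin u]" ?M "[]" "K + 2" w "lin v"] by (simp add: lin_def)
  also have "pdet (K + 2) w ([lin u] @ [lin u + smult (v - u) 1] @ ?M)
      = pdet (K + 2) w ([lin u] @ [lin u] @ ?M) + (v - u) * pdet (K + 2) w ([lin u] @ [1] @ ?M)"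
    by (rule pdet_linear) simp
  also have "pdet (K + 2) w ([lin u] @ [lin u] @ ?M) = 0"
    by (rule pdet_repeated) auto
  also have "pdet (K + 2) w ([lin u] @ [1] @ ?M) = - pdet (K + 2) w ([1, lin u] @ ?M)"
    using pdet_swap_adjacent[of "[]" ?M "K + 2" w "lin u" 1] by simp
  finally show ?thesis by (simp add: algebra_simps)
qed

lemma pdet_plucker_lin_lin:
  fixes X :: "'a poly"
  defines "M \<equiv> monom_multiples (lin u * lin v) K" and "T \<equiv> lin u * lin v * monom 1 K"
  shows "(u - v) * pdet (K + 2) w (M @ [T, X]) * pdet (K + 2) w ([1, lin u] @ M)
     - pdet (K + 2) w ([lin v] @ M @ [X]) * pdet (K + 2) w ([lin u] @ M @ [T])
     + pdet (K + 2) w ([lin v] @ M @ [T]) * pdet (K + 2) w ([lin u] @ M @ [X]) = 0"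
proof -
  have "pdet (K + 2) w (M @ [T, X]) * pdet (K + 2) w ([lin u] @ M @ [lin v])
     + (-1) ^ (K + 1) * pdet (K + 2) w ([lin v] @ M @ [X]) * pdet (K + 2) w ([lin u] @ M @ [T])
     + (-1) ^ (K + 2) * pdet (K + 2) w ([lin v] @ M @ [T]) * pdet (K + 2) w ([lin u] @ M @ [X]) = 0"
    using pdet_plucker[of "[lin u]" M "K + 2" "[lin v]" "[T, X]" w]
    by (simp add: M_def delete_at_def numeral_2_eq_2 lessThan_Suc algebra_simps)
  then have "(-1) ^ K * ((u - v) * pdet (K + 2) w (M @ [T, X]) * pdet (K + 2) w ([1, lin u] @ M)
     - pdet (K + 2) w ([lin v] @ M @ [X]) * pdet (K + 2) w ([lin u] @ M @ [T])
     + pdet (K + 2) w ([lin v] @ M @ [T]) * pdet (K + 2) w ([lin u] @ M @ [X])) = 0"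
    unfolding M_def pdet_lin_lin by (simp add: algebra_simps)
  then show ?thesis by simp
qed

end

lemma bilinear_f_h_eq_0_add_2:
  fixes w :: "nat \<Rightarrow> nat \<Rightarrow> 'a::{idom,ring_char_0}"
  shows "bilinear_f (K + 2) w u v = 0" and "bilinear_h (K + 2) w u v = 0"
proof -
  let ?M = "monom_multiples (lin u * lin v) K"
  let ?T = "\<lambda>i. lin u * lin v * monom 1 (K + i)"
  let ?F = "pdet (K + 2) w ([1, lin u] @ ?M)"
  let ?a = "\<lambda>i. pdet (K + 2) w ([lin u] @ ?M @ [?T i])"
  let ?b = "\<lambda>i. pdet (K + 2) w ([lin v] @ ?M @ [?T i])"
  let ?E = "\<lambda>i. pdet (K + 2) w (?M @ [?T 0, ?T i])"
  let ?P = "\<lambda>i. (u - v) * ?E i * ?F - ?b i * ?a 0 + ?b 0 * ?a i"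
  have plucker: "?P i = 0" for i
    using pdet_plucker_lin_lin[of u v K w "?T i"] by simp
  have comm: "lin v * lin u = lin u * lin v" by (rule mult.commute)
  note casorati_lin = casorati_f_lin_basis[of K w "lin u" v] casorati_f_lin_basis[of K w "lin v" u]
    casorati_g_lin_basis[of K w "lin u" v] casorati_g_lin_basis[of K w "lin v" u]
    casorati_h_lin_basis[of K w "lin u" v] casorati_h_lin_basis[of K w "lin v" u] casorati_f_1[of K w u v]
    casorati_f_expand[of K w "lin u * lin v"] casorati_g_expand[of K w "lin u * lin v"] comm
  have "bilinear_f (K + 2) w u v = - ?P 1"
    unfolding bilinear_f_def casorati_lin by (simp add: algebra_simps)
  then show "bilinear_f (K + 2) w u v = 0" using plucker[of 1] by (simp only: minus_zero)
  have "bilinear_h (K + 2) w u v = v * ?P 1 - ?P 2"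
    unfolding bilinear_h_def casorati_lin by (simp add: algebra_simps power2_eq_square)
  then show "bilinear_h (K + 2) w u v = 0" using plucker[of 1] plucker[of 2] by (simp only: mult_zero_right diff_zero)
qed

definition bilinear_s :: "nat \<Rightarrow> (nat \<Rightarrow> nat \<Rightarrow> 'a) \<Rightarrow> 'a \<Rightarrow> 'a::comm_ring_1" where
  "bilinear_s N w u =
     casorati_f N w (lin u) * (u * casorati_g N w 1 + casorati_h N w 1)
     - casorati_g N w (lin u) * (u * casorati_f N w 1 + casorati_g N w 1)
     + casorati_f N w 1 * casorati_s N w (lin u)"

lemma bilinear_s_eq_0_add_2:
  fixes w :: "nat \<Rightarrow> nat \<Rightarrow> 'a::{idom,ring_char_0}"
  shows "bilinear_s (K + 2) w u = 0"
proof -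
  let ?M = "monom_multiples (lin u) K"
  let ?L = "\<lambda>i. lin u * monom 1 (K + i)"
  let ?a = "\<lambda>i. pdet (K + 2) w ([1] @ ?M @ [?L i])"
  let ?E = "\<lambda>i j. pdet (K + 2) w (?M @ [?L i, ?L j])"
  have "(-1) ^ K * (?E 1 2 * ?a 0 - ?E 0 2 * ?a 1 + ?E 0 1 * ?a 2) = 0"
    using pdet_plucker[of "[1]" ?M "K + 2" "[]" "[?L 0, ?L 1, ?L 2]" w]
    by (simp add: delete_at_def numeral_3_eq_3 lessThan_Suc algebra_simps)
  then have plucker: "?E 1 2 * ?a 0 - ?E 0 2 * ?a 1 + ?E 0 1 * ?a 2 = 0"
    by simp
  have "bilinear_s (K + 2) w u = ?E 1 2 * ?a 0 - ?E 0 2 * ?a 1 + ?E 0 1 * ?a 2"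
    unfolding bilinear_s_def casorati_f_lin_basis[of K w 1 u] casorati_g_lin_basis[of K w 1 u]
      casorati_h_lin_basis[of K w 1 u] casorati_f_expand[of K w "lin u"] casorati_g_expand[of K w "lin u"]
      casorati_s_expand[of K w "lin u"]
    by (simp add: algebra_simps power2_eq_square)
  then show ?thesis using plucker by (simp only:)
qed

section \<open>The identity with a cubic factor\<close>

definition cubic :: "'a \<Rightarrow> 'a \<Rightarrow> 'a \<Rightarrow> 'a::comm_ring_1 poly" where
  "cubic e1 e2 e3 = [:e3, e2, e1, 1:]"

lemma monic_deg_cubic: "monic_deg (cubic e1 e2 e3) 3"
  by (simp add: cubic_def monic_deg_def numeral_3_eq_3)

lemma cubic_nonzero [simp]: "cubic e1 e2 e3 \<noteq> 0"
  by (simp add: cubic_def)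

definition bilinear_cubic ::
    "nat \<Rightarrow> (nat \<Rightarrow> nat \<Rightarrow> 'a) \<Rightarrow> 'a \<Rightarrow> 'a \<Rightarrow> 'a \<Rightarrow> 'a \<Rightarrow> 'a \<Rightarrow> 'a::comm_ring_1" where
  "bilinear_cubic N w u v e1 e2 e3 =
     (let Q = cubic e1 e2 e3; D = lin u * lin v in
      (u - v) * ((u\<^sup>2 + u * v + v\<^sup>2 - e1 * (u + v) + e2) * casorati_f N w Q * casorati_f N w D
        + (u + v - e1) * (casorati_g N w Q * casorati_f N w D - casorati_f N w Q * casorati_g N w D)
        + casorati_s N w Q * casorati_f N w D - casorati_g N w Q * casorati_g N w D
        + casorati_f N w Q * casorati_h N w D)
      + poly Q (- u) * casorati_f N w (lin u * Q) * casorati_f N w (lin v)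
      - poly Q (- v) * casorati_f N w (lin v * Q) * casorati_f N w (lin u))"

text \<open>All Casoratians are written in the basis \<open>M\<close> of multiples of \<open>D Q\<close>.  The identity is then
  the Pluecker relation for \<open>C @ M\<close> and \<open>[Q, Q lin u] @ M @ [U 0, U 1, U 2]\<close>, together with
  the reduction of \<open>ell\<close> modulo multiples of \<open>D\<close>, where \<open>Q lin u\<close> reduces to \<open>Q(-v) lin u\<close>.\<close>
context
  fixes w :: "nat \<Rightarrow> nat \<Rightarrow> 'a::{idom,ring_char_0}" and u v e1 e2 e3 :: 'a and K :: nat
begin

private definition "Q = cubic e1 e2 e3"
private definition "D = lin u * lin v"
private definition "M = monom_multiples (D * Q) K"
private definition "U i = D * Q * monom 1 (K + i)"
private definition "C = monom_multiples D 3"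
private definition "X a b = pdet (K + 4) w ([Q, Q * lin u] @ M @ [a, b])"
private definition "Y a = pdet (K + 4) w (C @ M @ [a])"
private definition "Z x = pdet (K + 4) w ([x] @ M @ map U [0..<3])"
private definition "ell x = pdet (K + 4) w (C @ [x] @ M)"

private lemma length_M [simp]: "length M = K"
  by (simp add: M_def)

private lemma length_C [simp]: "length C = 3"
  by (simp add: C_def)

private lemma monom_multiples_DQ: "monom_multiples (D * Q) (K + n) = M @ map U [0..<n]"
  by (simp add: monom_multiples_add M_def U_def)

private lemma pdet_cubic_basis:
  assumes "m + length B = 2" "n = K + 2 + m"
  shows "pdet (K + 4) w (monom_multiples Q n @ B) = pdet (K + 4) w ([Q, Q * lin u] @ M @ map U [0..<m] @ B)"
proof -
  have "pdet (K + 4) w (monom_multiples Q n @ B)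
      = pdet (K + 4) w (map (\<lambda>c. Q * c) [1, lin u] @ monom_multiples (Q * D) (n - 2) @ B)"
    unfolding assms(2)
    by (rule pdet_factor_basis) (use assms in \<open>auto simp: monic_deg_nth_1_lin monic_deg_lin_lin D_def\<close>)
  then show ?thesis using assms(2) by (simp add: mult.commute[of Q D] monom_multiples_DQ)
qed

private lemma pdet_D_basis:
  assumes "m + length B = 1" "n = K + 3 + m"
  shows "pdet (K + 4) w (monom_multiples D n @ B) = pdet (K + 4) w (C @ M @ map U [0..<m] @ B)"
proof -
  have "pdet (K + 4) w (monom_multiples D n @ B)
      = pdet (K + 4) w (map (\<lambda>c. D * c) (map (monom 1) [0..<3]) @ monom_multiples (D * Q) (n - 3) @ B)"
    unfolding assms(2)
    by (rule pdet_factor_basis) (use assms in \<open>auto simp: monic_deg_monom monic_deg_cubic Q_def\<close>)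
  then show ?thesis using assms(2) by (simp add: C_def monom_multiples_def[of D 3] monom_multiples_DQ comp_def)
qed

private lemma casorati_f_lin_cubic:
  assumes "lin x * lin y = D"
  shows "casorati_f (K + 4) w (lin x * Q) = Z (Q * lin x)"
proof -
  have "casorati_f (K + 4) w (lin x * Q) = pdet (K + 4) w (monom_multiples (lin x * Q) (K + 4) @ [])"
    by (simp add: casorati_f_def casorati_upt)
  also have "\<dots> = pdet (K + 4) w (map (\<lambda>c. lin x * Q * c) [1] @ monom_multiples (lin x * Q * lin y) (K + 4 - 1) @ [])"
    by (rule pdet_factor_basis[of _ 1]) (auto simp: monic_deg_1 monic_deg_lin)
  also have "lin x * Q * lin y = D * Q"
    using assms by (simp add: algebra_simps)
  also have "monom_multiples (D * Q) (K + 4 - 1) = M @ map U [0..<3]"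
    using monom_multiples_DQ[of 3] by (simp add: add.commute)
  finally show ?thesis
    by (simp add: Z_def mult.commute[of Q])
qed

private lemma casorati_f_lin:
  assumes "lin x * lin y = D"
  shows "casorati_f (K + 4) w (lin x) = - ell (lin x)"
proof -
  let ?Cs = "1 # map (\<lambda>k. lin y * monom 1 k) [0..<3]"
  have monic: "monic_deg (?Cs ! i) i" if "i < 4" for i
  proof (cases i)
    case (Suc k)
    then show ?thesis
      using that monic_deg_mult[OF monic_deg_lin monic_deg_monom, of y k] by simp
  qed (simp add: monic_deg_1)
  have "casorati_f (K + 4) w (lin x) = pdet (K + 4) w (monom_multiples (lin x) (K + 4) @ [])"
    by (simp add: casorati_f_def casorati_upt)
  also have "\<dots> = pdet (K + 4) w (map (\<lambda>c. lin x * c) ?Cs @ monom_multiples (lin x * (lin y * Q)) (K + 4 - 4) @ [])"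
    by (rule pdet_factor_basis)
      (use monic monic_deg_mult[OF monic_deg_lin monic_deg_cubic, of y e1 e2 e3] in \<open>auto simp: Q_def\<close>)
  also have "\<dots> = pdet (K + 4) w ([] @ [lin x] @ C @ M)"
    using assms by (simp add: C_def M_def monom_multiples_def mult.assoc[symmetric] comp_def)
  also have "\<dots> = - ell (lin x)"
    by (subst pdet_move_right) (simp_all add: ell_def)
  finally show ?thesis .
qed

private lemma map_U_2: "map U [0..<2] = [U 0, U 1]"
  by (simp add: numeral_2_eq_2)

private lemma X_linear_left: "X (a + smult c b) z = X a z + c * X b z"
  unfolding X_def using pdet_linear[of "[Q, Q * lin u] @ M" "[z]" "K + 4" w a c b] by simp

private lemma X_linear_right: "X z (a + smult c b) = X z a + c * X z b"
  unfolding X_def using pdet_linear[of "[Q, Q * lin u] @ M @ [z]" "[]" "K + 4" w a c b] by simp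

private lemma X_same: "X a a = 0"
  unfolding X_def using pdet_repeated[of "[Q, Q * lin u] @ M @ [a]" "[]" "K + 4" a w] by simp

private lemma X_swap: "X b a = - X a b"
  unfolding X_def using pdet_swap_adjacent[of "[Q, Q * lin u] @ M" "[]" "K + 4" w b a] by simp

private lemma Y_linear: "Y (a + smult c b) = Y a + c * Y b"
  unfolding Y_def using pdet_linear[of "C @ M" "[]" "K + 4" w a c b] by simp

private lemma casorati_f_cubic: "casorati_f (K + 4) w Q = X (U 0) (U 1)"
  using pdet_cubic_basis[of 2 "[]" "K + 4"] by (simp add: casorati_f_def casorati_upt X_def map_U_2)

private lemma casorati_f_D: "casorati_f (K + 4) w D = Y (U 0)"
  using pdet_D_basis[of 1 "[]" "K + 4"] by (simp add: casorati_f_def casorati_upt Y_def)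

private lemma casorati_g_cubic: "casorati_g (K + 4) w Q = X (U 0) (U 2) - (u + v) * X (U 0) (U 1)"
proof -
  let ?y = "U 2 + smult (- (u + v)) (U 1)"
  have "casorati_g (K + 4) w Q = casorati (K + 4) w Q ([0..<K + 3] @ [K + 4])"
    by (simp add: casorati_g_def add.commute)
  also have "\<dots> = pdet (K + 4) w (monom_multiples Q (K + 3) @ [?y])"
  proof (rule casorati_reduce_last)
    show "Q * monom 1 (K + 4) = ?y + Q * (smult (u\<^sup>2 + u * v + v\<^sup>2) (monom 1 (K + 2)) + smult (u * v * (u + v)) (monom 1 (K + 1)))"
      by (rule poly_ext) (simp add: U_def D_def poly_monom algebra_simps power2_eq_square power_add eval_nat_numeral)
  qed (auto intro!: degree_add_less degree_diff_less degree_smult_monom_less)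
  also have "\<dots> = X (U 0) ?y"
    using pdet_cubic_basis[of 1 "[?y]" "K + 3"] by (simp add: X_def)
  also have "\<dots> = X (U 0) (U 2) - (u + v) * X (U 0) (U 1)"
    unfolding X_linear_right by (simp add: algebra_simps)
  finally show ?thesis .
qed

private lemma casorati_s_cubic:
  "casorati_s (K + 4) w Q = X (U 1) (U 2) - (u + v) * X (U 0) (U 2) + u * v * X (U 0) (U 1)"
proof -
  let ?e = "u + v" and ?h = "u\<^sup>2 + u * v + v\<^sup>2"
  let ?y1 = "U 1 + smult (- ?e) (U 0)" and ?y2 = "(U 2 + smult (- ?e) (U 1)) + smult ?h (U 0)"
  let ?r1 = "smult ?h (monom 1 (K + 1)) + smult (u * v * ?e) (monom 1 K)"
  let ?r2 = "smult (- (?e ^ 3 - 2 * ?e * (u * v))) (monom 1 (K + 1)) + smult (- ((?e\<^sup>2 - u * v) * (u * v))) (monom 1 K)"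
  have r1: "Q * monom 1 (K + 3) = ?y1 + Q * ?r1"
    by (rule poly_ext) (simp add: U_def D_def poly_monom algebra_simps power2_eq_square power_add eval_nat_numeral)
  have r2: "Q * monom 1 (K + 4) = ?y2 + Q * ?r2"
    by (rule poly_ext)
      (simp add: U_def D_def poly_monom algebra_simps power2_eq_square power3_eq_cube power_add eval_nat_numeral)
  have "casorati_s (K + 4) w Q = pdet (K + 4) w (monom_multiples Q (K + 2) @ [?y1 + Q * ?r1] @ [?y2 + Q * ?r2] @ [])"
    unfolding r1[symmetric] r2[symmetric] by (simp add: casorati_s_def casorati_def monom_multiples_def add.commute)
  also have "\<dots> = pdet (K + 4) w (monom_multiples Q (K + 2) @ [?y1 + Q * ?r1] @ [?y2] @ [])"
    by (rule pdet_reduce_column) (auto intro!: degree_add_less degree_diff_less degree_smult_monom_less)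
  also have "\<dots> = pdet (K + 4) w (monom_multiples Q (K + 2) @ [] @ [?y1] @ [?y2])"
    by (simp, rule pdet_reduce_column[of _ _ "[]", simplified]) (auto intro!: degree_add_less degree_diff_less degree_smult_monom_less)
  also have "\<dots> = X ?y1 ?y2"
    using pdet_cubic_basis[of 0 "[?y1, ?y2]" "K + 2"] by (simp add: X_def)
  also have "\<dots> = X (U 1) (U 2) - (u + v) * X (U 0) (U 2) + u * v * X (U 0) (U 1)"
    unfolding X_linear_left X_linear_right X_same X_swap[of "U 0"] by (simp add: algebra_simps power2_eq_square)
  finally show ?thesis .
qed

private lemma casorati_g_D: "casorati_g (K + 4) w D = Y (U 1) - e1 * Y (U 0)"
proof -
  let ?y = "U 1 + smult (- e1) (U 0)"
  have "casorati_g (K + 4) w D = casorati (K + 4) w D ([0..<K + 3] @ [K + 4])"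
    by (simp add: casorati_g_def add.commute)
  also have "\<dots> = pdet (K + 4) w (monom_multiples D (K + 3) @ [?y])"
  proof (rule casorati_reduce_last)
    show "D * monom 1 (K + 4) = ?y + D * (smult (e1\<^sup>2 - e2) (monom 1 (K + 2))
        + smult (e1 * e2 - e3) (monom 1 (K + 1)) + smult (e1 * e3) (monom 1 K))"
      by (rule poly_ext)
        (simp add: U_def D_def Q_def cubic_def poly_monom algebra_simps power2_eq_square power_add eval_nat_numeral)
  qed (auto intro!: degree_add_less degree_diff_less degree_smult_monom_less)
  also have "\<dots> = Y ?y"
    using pdet_D_basis[of 0 "[?y]" "K + 3"] by (simp add: Y_def)
  also have "\<dots> = Y (U 1) - e1 * Y (U 0)"
    unfolding Y_linear by simp
  finally show ?thesis .
qed

private lemma casorati_h_D: "casorati_h (K + 4) w D = Y (U 2) - e1 * Y (U 1) + (e1\<^sup>2 - e2) * Y (U 0)"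
proof -
  let ?y = "(U 2 + smult (- e1) (U 1)) + smult (e1\<^sup>2 - e2) (U 0)"
  have "casorati_h (K + 4) w D = casorati (K + 4) w D ([0..<K + 3] @ [K + 5])"
    by (simp add: casorati_h_def add.commute)
  also have "\<dots> = pdet (K + 4) w (monom_multiples D (K + 3) @ [?y])"
  proof (rule casorati_reduce_last)
    show "D * monom 1 (K + 5) = ?y + D * (smult (- (e3 - 2 * e1 * e2 + e1 ^ 3)) (monom 1 (K + 2))
        + smult (e1 * e3 - e1\<^sup>2 * e2 + e2\<^sup>2) (monom 1 (K + 1)) + smult (- ((e1\<^sup>2 - e2) * e3)) (monom 1 K))"
      by (rule poly_ext)
        (simp add: U_def D_def Q_def cubic_def poly_monom algebra_simps power2_eq_square power3_eq_cube
          power_add eval_nat_numeral)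
  qed (auto intro!: degree_add_less degree_diff_less degree_smult_monom_less)
  also have "\<dots> = Y ?y"
    using pdet_D_basis[of 0 "[?y]" "K + 3"] by (simp add: Y_def)
  also have "\<dots> = Y (U 2) - e1 * Y (U 1) + (e1\<^sup>2 - e2) * Y (U 0)"
    unfolding Y_linear by simp
  finally show ?thesis .
qed

private lemma ell_linear: "ell (P + smult c R) = ell P + c * ell R"
  unfolding ell_def by (rule pdet_linear) simp

private lemma ell_smult: "ell (smult c R) = c * ell R"
  using ell_linear[of 0 c R] pdet_zero[of C M "K + 4" w] by (simp add: ell_def)

private lemma ell_reduce: "degree r < 3 \<Longrightarrow> ell (y + D * r) = ell y"
  unfolding ell_def C_def using pdet_reduce_column[of r 3 "[]" M "K + 4" w D y] by simp

private lemma ell_cubic_lin: "ell (Q * lin u) = poly Q (- v) * ell (lin u)"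
proof -
  have "Q * lin u = smult (poly Q (- v)) (lin u) + D * [:e2 - e1 * v + v\<^sup>2, e1 - v, 1:]"
    by (rule poly_ext) (simp add: Q_def cubic_def D_def algebra_simps power2_eq_square power3_eq_cube)
  moreover have "degree [:e2 - e1 * v + v\<^sup>2, e1 - v, 1:] < 3" by simp
  ultimately show ?thesis by (simp only: ell_reduce ell_smult)
qed

private lemma ell_cubic: "(u - v) * ell Q + poly Q (- u) * ell (lin v) - poly Q (- v) * ell (lin u) = 0"
proof -
  have "smult (- (u - v)) Q = (smult (poly Q (- u)) (lin v) + smult (- poly Q (- v)) (lin u))
      + D * [:- (u - v) * (e1 - u - v), - (u - v):]"
    by (rule poly_ext) (simp add: Q_def cubic_def D_def algebra_simps power2_eq_square power3_eq_cube)
  moreover have "degree [:- (u - v) * (e1 - u - v), - (u - v):] < 3" by simp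
  ultimately have "ell (smult (- (u - v)) Q) = ell (smult (poly Q (- u)) (lin v)) + (- poly Q (- v)) * ell (lin u)"
    by (simp only: ell_reduce ell_linear)
  then show ?thesis by (simp add: ell_smult algebra_simps)
qed

private lemma Z_linear: "Z (P + smult c R) = Z P + c * Z R"
  unfolding Z_def using pdet_linear[of "[]" "M @ map U [0..<3]" "K + 4" w P c R] by simp

private lemma plucker_cubic:
  "X (U 1) (U 2) * Y (U 0) - X (U 0) (U 2) * Y (U 1) + X (U 0) (U 1) * Y (U 2)
     = Z Q * ell (Q * lin u) - Z (Q * lin u) * ell Q"
proof -
  have move: "pdet (K + 4) w (C @ M @ [x]) = (-1) ^ K * ell x" for x
    using pdet_move_left[of C M "[]" "K + 4" w x] by (simp add: ell_def)
  have "Z (Q * lin u) * pdet (K + 4) w (C @ M @ [Q]) - Z Q * pdet (K + 4) w (C @ M @ [Q * lin u])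
     + (-1) ^ K * (X (U 1) (U 2) * Y (U 0) - X (U 0) (U 2) * Y (U 1) + X (U 0) (U 1) * Y (U 2)) = 0"
    using pdet_plucker[of C M "K + 4" "[Q, Q * lin u]" "map U [0..<3]" w]
    by (simp add: delete_at_def numeral_3_eq_3 numeral_2_eq_2 lessThan_Suc Z_def X_def Y_def algebra_simps)
  then have "(-1) ^ K * (Z (Q * lin u) * ell Q - Z Q * ell (Q * lin u)
     + (X (U 1) (U 2) * Y (U 0) - X (U 0) (U 2) * Y (U 1) + X (U 0) (U 1) * Y (U 2))) = 0"
    unfolding move by (simp add: algebra_simps)
  then have "Z (Q * lin u) * ell Q - Z Q * ell (Q * lin u)
     + (X (U 1) (U 2) * Y (U 0) - X (U 0) (U 2) * Y (U 1) + X (U 0) (U 1) * Y (U 2)) = 0"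
    by simp
  then show ?thesis by (simp add: algebra_simps)
qed

lemma bilinear_cubic_eq_0_add_4: "bilinear_cubic (K + 4) w u v e1 e2 e3 = 0"
proof -
  have D_comm: "lin v * lin u = D" by (simp add: D_def mult.commute)
  have Z_v: "Z (Q * lin v) = Z (Q * lin u) + (v - u) * Z Q"
  proof -
    have "Q * lin v = Q * lin u + smult (v - u) Q" by (rule poly_ext) (simp add: algebra_simps)
    then show ?thesis by (simp add: Z_linear)
  qed
  have "bilinear_cubic (K + 4) w u v e1 e2 e3
      = (u - v) * (X (U 1) (U 2) * Y (U 0) - X (U 0) (U 2) * Y (U 1) + X (U 0) (U 1) * Y (U 2))
        - poly Q (- u) * Z (Q * lin u) * ell (lin v) + poly Q (- v) * Z (Q * lin v) * ell (lin u)"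
    unfolding bilinear_cubic_def Let_def Q_def[symmetric] D_def[symmetric] casorati_f_cubic casorati_f_D
      casorati_g_cubic casorati_g_D casorati_h_D casorati_s_cubic
      casorati_f_lin_cubic[of u v, OF D_def[symmetric]] casorati_f_lin_cubic[of v u, OF D_comm]
      casorati_f_lin[of u v, OF D_def[symmetric]] casorati_f_lin[of v u, OF D_comm]
    by (simp add: algebra_simps power2_eq_square)
  also have "\<dots> = (u - v) * Z Q * (ell (Q * lin u) - poly Q (- v) * ell (lin u))
      - Z (Q * lin u) * ((u - v) * ell Q + poly Q (- u) * ell (lin v) - poly Q (- v) * ell (lin u))"
    unfolding plucker_cubic Z_v by (simp add: algebra_simps)
  also have "\<dots> = 0"
    unfolding ell_cubic_lin ell_cubic by simp
  finally show ?thesis .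
qed

end

section \<open>Small \<open>N\<close>: adjoining a geometric row\<close>

primrec primitive :: "(nat \<Rightarrow> nat \<Rightarrow> 'a) \<Rightarrow> 'a \<Rightarrow> nat \<Rightarrow> nat \<Rightarrow> 'a::comm_ring_1" where
  "primitive w c 0 i = 0"
| "primitive w c (Suc l) i = w l i + c * primitive w c l i"

definition extend :: "(nat \<Rightarrow> nat \<Rightarrow> 'a) \<Rightarrow> 'a \<Rightarrow> nat \<Rightarrow> nat \<Rightarrow> nat \<Rightarrow> 'a::comm_ring_1" where
  "extend w c N l i = (if i < N then primitive w c l i else c ^ l)"

definition geom :: "'a \<Rightarrow> nat \<Rightarrow> nat \<Rightarrow> 'a::comm_ring_1 poly" where
  "geom c a b = (\<Sum>t\<in>{a..<b}. smult (c ^ (b - 1 - t)) (monom 1 t))"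

lemma smult_sum_right: "smult c (\<Sum>t\<in>A. f t) = (\<Sum>t\<in>A. smult c (f t))"
  by (induction A rule: infinite_finite_induct) (simp_all add: smult_add_right)

lemma geom_Suc: "a \<le> b \<Longrightarrow> geom c a (Suc b) = smult c (geom c a b) + monom 1 b"
proof -
  assume "a \<le> b"
  then have "{a..<Suc b} = insert b {a..<b}" by auto
  moreover have "c ^ (Suc b - 1 - t) = c * c ^ (b - 1 - t)" if "t \<in> {a..<b}" for t
  proof -
    have "Suc b - 1 - t = Suc (b - 1 - t)" using that by auto
    then show ?thesis by simp
  qed
  ultimately show ?thesis
    unfolding geom_def smult_sum_right by (simp add: smult_smult add.commute)
qed

lemma lin_geom:
  assumes "a \<le> b"
  shows "lin (- c) * geom c a b = monom 1 b - smult (c ^ (b - a)) (monom 1 a)"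
  using assms
proof (induction b rule: dec_induct)
  case base
  then show ?case by (simp add: geom_def)
next
  case (step n)
  have lin_monom: "lin (- c) * monom 1 n = monom 1 (Suc n) - smult c (monom 1 n)"
    by (simp add: lin_def monom_Suc)
  have "lin (- c) * geom c a (Suc n) = smult c (lin (- c) * geom c a n) + lin (- c) * monom 1 n"
    by (simp add: geom_Suc[OF step(1)] algebra_simps)
  also have "\<dots> = smult c (monom 1 n - smult (c ^ (n - a)) (monom 1 a)) + (monom 1 (Suc n) - smult c (monom 1 n))"
    by (simp only: step.IH lin_monom)
  also have "\<dots> = monom 1 (Suc n) - smult (c ^ (Suc n - a)) (monom 1 a)"
    using step(1) by (simp add: Suc_diff_le algebra_simps smult_diff_right)
  finally show ?case .
qed

lemma geom_Suc_self: "geom c a (Suc a) = monom 1 a"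
  by (simp add: geom_def)

lemma pcol_extend_row: "i < N \<Longrightarrow> pcol (extend w c N) P i = pcol (primitive w c) P i"
  by (simp add: pcol_def extend_def)

lemma pcol_extend_last: "pcol (extend w c N) P N = poly P c"
  by (simp add: pcol_def extend_def poly_altdef mult.commute)

lemma pcol_primitive_lin: "pcol (primitive w c) (lin (- c) * R) i = pcol w R i"
proof -
  have d: "degree R < Suc (degree R)" by simp
  have lin_monom: "lin (- c) * monom 1 t = monom 1 (Suc t) + smult (- c) (monom 1 t)" for t
    by (simp add: lin_def monom_Suc)
  have "pcol (primitive w c) (lin (- c) * monom 1 t) i = w t i" for t
    unfolding lin_monom pcol_add pcol_smult pcol_monom by simp
  then show ?thesis
    using pcol_mult_expand[OF d, of "primitive w c" "lin (- c)"] pcol_eq_sum_lessThan[OF d, of w] by simp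
qed

text \<open>Subtracting \<open>c\<close> times each column from the next one clears the last row except for its
  first entry; the remaining rows are those of \<open>w\<close>, applied to \<open>D\<close> times geometric sums.\<close>
lemma casorati_extend:
  assumes sorted: "\<And>j. j < N \<Longrightarrow> ls ! j < ls ! Suc j" and len: "length ls = Suc N"
  shows "casorati (Suc N) (extend w c N) D ls
       = (-1) ^ N * (c ^ (ls ! 0) * poly D c) * pdet N w (map (\<lambda>j. D * geom c (ls ! j) (ls ! Suc j)) [0..<N])"
proof -
  let ?W = "extend w c N"
  let ?Ps = "map (\<lambda>l. D * monom 1 l) ls"
  let ?Qs = "D * monom 1 (ls ! 0) # map (\<lambda>j. lin (- c) * (D * geom c (ls ! j) (ls ! Suc j))) [0..<N]"
  let ?U = "\<lambda>t j. if Suc t = j then - (c ^ (ls ! j - ls ! t)) else 0"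
  have "pdet (Suc N) ?W ?Qs = pdet (Suc N) ?W ?Ps"
  proof (rule pdet_unitriangular[where U = ?U])
    fix j assume j: "j < Suc N"
    show "?Qs ! j = ?Ps ! j + (\<Sum>t<j. smult (?U t j) (?Ps ! t))"
    proof (cases j)
      case (Suc k)
      have le: "ls ! k \<le> ls ! j" using sorted[of k] j Suc by simp
      have "(\<Sum>t<j. smult (?U t j) (?Ps ! t)) = smult (- (c ^ (ls ! j - ls ! k))) (?Ps ! k)"
        using Suc by (subst sum.mono_neutral_cong_right[of _ "{k}"]) auto
      moreover have "?Qs ! j = D * (monom 1 (ls ! j) - smult (c ^ (ls ! j - ls ! k)) (monom 1 (ls ! k)))"
        using Suc j lin_geom[OF le, of c] by (simp add: mult.left_commute)
      ultimately show ?thesis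
        using Suc j len by (simp add: algebra_simps)
    qed (use len in simp)
  qed (use len in auto)
  also have "pdet (Suc N) ?W ?Ps = casorati (Suc N) ?W D ls"
    by (simp add: casorati_def len)
  finally have "casorati (Suc N) ?W D ls = col_det (Suc N) (map (pcol ?W) ?Qs)"
    by (simp add: pdet_def)
  also have "\<dots> = (-1) ^ N * (map (pcol ?W) ?Qs ! 0) N * col_det N (tl (map (pcol ?W) ?Qs))"
  proof (rule col_det_last_row)
    fix j assume "0 < j" "j \<le> N"
    then show "(map (pcol ?W) ?Qs ! j) N = 0" by (cases j) (auto simp: pcol_extend_last)
  qed simp
  also have "(map (pcol ?W) ?Qs ! 0) N = c ^ (ls ! 0) * poly D c"
    by (simp add: pcol_extend_last poly_monom)
  also have "col_det N (tl (map (pcol ?W) ?Qs)) = pdet N w (map (\<lambda>j. D * geom c (ls ! j) (ls ! Suc j)) [0..<N])"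
    unfolding pdet_def by (rule col_det_cong) (simp add: pcol_extend_row pcol_primitive_lin)
  finally show ?thesis by simp
qed

lemma geom_Suc_Suc: "geom c a (Suc (Suc a)) = monom 1 (Suc a) + smult c (monom 1 a)"
proof -
  have "{a..<Suc (Suc a)} = {a, Suc a}" by auto
  then show ?thesis by (simp add: geom_def add.commute)
qed

lemma geom_Suc_Suc_Suc:
  "geom c a (Suc (Suc (Suc a))) = monom 1 (Suc (Suc a)) + smult c (monom 1 (Suc a)) + smult (c\<^sup>2) (monom 1 a)"
proof -
  have "{a..<Suc (Suc (Suc a))} = {a, Suc a, Suc (Suc a)}" by auto
  then show ?thesis by (simp add: geom_def add_ac power2_eq_square)
qed

lemma map_geom_prefix:
  assumes "M < length ls" "\<And>j. j \<le> M \<Longrightarrow> ls ! j = j"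
  shows "map (\<lambda>j. D * geom c (ls ! j) (ls ! Suc j)) [0..<M] = map (\<lambda>l. D * monom 1 l) [0..<M]"
  using assms by (intro map_cong) (auto simp: geom_Suc_self)

context
  fixes w :: "nat \<Rightarrow> nat \<Rightarrow> 'a::comm_ring_1" and c :: 'a and D :: "'a poly"
begin

lemma casorati_f_extend: "casorati_f (Suc N) (extend w c N) D = (-1) ^ N * poly D c * casorati_f N w D"
proof -
  have "casorati (Suc N) (extend w c N) D [0..<Suc N]
      = (-1) ^ N * (c ^ ([0..<Suc N] ! 0) * poly D c) * pdet N w (map (\<lambda>j. D * geom c ([0..<Suc N] ! j) ([0..<Suc N] ! Suc j)) [0..<N])"
    by (rule casorati_extend) (auto simp del: upt_Suc)
  also have "map (\<lambda>j. D * geom c ([0..<Suc N] ! j) ([0..<Suc N] ! Suc j)) [0..<N] = map (\<lambda>l. D * monom 1 l) [0..<N]"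
    by (rule map_cong[OF refl]) (simp add: geom_Suc_self nth_upt del: upt_Suc)
  also have "[0..<Suc N] ! 0 = 0" by (simp del: upt_Suc)
  finally show ?thesis by (simp add: casorati_f_def casorati_def del: upt_Suc)
qed

lemma casorati_g_extend:
  assumes "1 \<le> N"
  shows "casorati_g (Suc N) (extend w c N) D = (-1) ^ N * poly D c * (casorati_g N w D + c * casorati_f N w D)"
proof -
  obtain M where M: "N = Suc M" using assms by (cases N) auto
  let ?ls = "[0..<N] @ [Suc N]"
  let ?cols = "map (\<lambda>l. D * monom 1 l) [0..<M]"
  have prefix: "map (\<lambda>j. D * geom c (?ls ! j) (?ls ! Suc j)) [0..<M] = ?cols"
    by (rule map_geom_prefix) (use M in \<open>auto simp: nth_append\<close>)
  have "casorati (Suc N) (extend w c N) D ?ls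
      = (-1) ^ N * (c ^ (?ls ! 0) * poly D c) * pdet N w (map (\<lambda>j. D * geom c (?ls ! j) (?ls ! Suc j)) [0..<N])"
    by (rule casorati_extend) (auto simp: nth_append)
  also have "map (\<lambda>j. D * geom c (?ls ! j) (?ls ! Suc j)) [0..<N]
      = ?cols @ [D * monom 1 N + smult c (D * monom 1 M)]"
    using M prefix by (simp add: nth_append geom_Suc_Suc algebra_simps)
  also have "pdet N w (?cols @ [D * monom 1 N + smult c (D * monom 1 M)])
      = pdet N w (?cols @ [D * monom 1 N]) + c * pdet N w (?cols @ [D * monom 1 M])"
    by (rule pdet_linear_last) (simp add: M)
  also have "?ls ! 0 = 0" using M by (simp add: nth_append)
  finally show ?thesis using M by (simp add: casorati_g_def casorati_f_def casorati_def)
qed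

lemma casorati_h_extend:
  assumes "1 \<le> N"
  shows "casorati_h (Suc N) (extend w c N) D
       = (-1) ^ N * poly D c * (casorati_h N w D + c * casorati_g N w D + c\<^sup>2 * casorati_f N w D)"
proof -
  obtain M where M: "N = Suc M" using assms by (cases N) auto
  let ?ls = "[0..<N] @ [Suc (Suc N)]"
  let ?cols = "map (\<lambda>l. D * monom 1 l) [0..<M]"
  have prefix: "map (\<lambda>j. D * geom c (?ls ! j) (?ls ! Suc j)) [0..<M] = ?cols"
    by (rule map_geom_prefix) (use M in \<open>auto simp: nth_append\<close>)
  have "casorati (Suc N) (extend w c N) D ?ls
      = (-1) ^ N * (c ^ (?ls ! 0) * poly D c) * pdet N w (map (\<lambda>j. D * geom c (?ls ! j) (?ls ! Suc j)) [0..<N])"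
    by (rule casorati_extend) (auto simp: nth_append)
  also have "map (\<lambda>j. D * geom c (?ls ! j) (?ls ! Suc j)) [0..<N]
      = ?cols @ [(D * monom 1 (Suc N) + smult c (D * monom 1 N)) + smult (c\<^sup>2) (D * monom 1 M)]"
    using M prefix by (simp add: nth_append geom_Suc_Suc_Suc algebra_simps)
  also have "pdet N w (?cols @ [(D * monom 1 (Suc N) + smult c (D * monom 1 N)) + smult (c\<^sup>2) (D * monom 1 M)])
      = pdet N w (?cols @ [D * monom 1 (Suc N)]) + c * pdet N w (?cols @ [D * monom 1 N])
        + c\<^sup>2 * pdet N w (?cols @ [D * monom 1 M])"
    using M by (simp add: pdet_linear_last)
  also have "?ls ! 0 = 0" using M by (simp add: nth_append)
  finally show ?thesis using M by (simp add: casorati_h_def casorati_g_def casorati_f_def casorati_def algebra_simps)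
qed

lemma casorati_s_extend:
  assumes "1 \<le> N"
  shows "casorati_s (Suc N) (extend w c N) D = (-1) ^ N * poly D c * (casorati_s N w D + c * casorati_g N w D)"
proof (cases "N = 1")
  case True
  have "casorati (Suc 1) (extend w c 1) D [1, 2]
      = (-1) ^ 1 * (c ^ ([1, 2] ! 0) * poly D c) * pdet 1 w (map (\<lambda>j. D * geom c ([1, 2] ! j) ([1, 2] ! Suc j)) [0..<1])"
    by (rule casorati_extend) auto
  moreover have "geom c 1 2 = monom 1 1"
    using geom_Suc_self[of c 1] by (simp add: numeral_2_eq_2)
  ultimately show ?thesis
    using True by (simp add: casorati_s_def casorati_g_def casorati_def numeral_2_eq_2)
next
  case False
  then obtain M where M: "N = Suc (Suc M)" using assms by (cases N; cases "N - 1") auto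
  let ?ls = "[0..<Suc M] @ [N, Suc N]"
  let ?cols = "map (\<lambda>l. D * monom 1 l) [0..<M]"
  have prefix: "map (\<lambda>j. D * geom c (?ls ! j) (?ls ! Suc j)) [0..<M] = ?cols"
    by (rule map_geom_prefix) (use M in \<open>auto simp: nth_append\<close>)
  have "casorati (Suc N) (extend w c N) D ?ls
      = (-1) ^ N * (c ^ (?ls ! 0) * poly D c) * pdet N w (map (\<lambda>j. D * geom c (?ls ! j) (?ls ! Suc j)) [0..<N])"
    by (rule casorati_extend) (use M in \<open>auto simp: nth_append less_Suc_eq\<close>)
  also have "map (\<lambda>j. D * geom c (?ls ! j) (?ls ! Suc j)) [0..<N]
      = ?cols @ [D * monom 1 (Suc M) + smult c (D * monom 1 M)] @ [D * monom 1 N]"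
    using M prefix by (simp add: nth_append geom_Suc_self geom_Suc_Suc algebra_simps)
  also have "pdet N w (?cols @ [D * monom 1 (Suc M) + smult c (D * monom 1 M)] @ [D * monom 1 N])
      = pdet N w (?cols @ [D * monom 1 (Suc M)] @ [D * monom 1 N]) + c * pdet N w (?cols @ [D * monom 1 M] @ [D * monom 1 N])"
    by (rule pdet_linear) (simp add: M)
  also have "?ls ! 0 = 0" using M by (simp add: nth_append)
  finally show ?thesis using M by (simp add: casorati_s_def casorati_g_def casorati_def)
qed

end

lemma vanishes_by_extension:
  fixes F :: "nat \<Rightarrow> (nat \<Rightarrow> nat \<Rightarrow> 'a::{idom,ring_char_0}) \<Rightarrow> 'a"
  assumes large: "\<And>N w. N\<^sub>0 \<le> N \<Longrightarrow> F N w = 0"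
    and extend: "\<And>N w c. 1 \<le> N \<Longrightarrow> F (Suc N) (extend w c N) = poly P c * F N w"
    and "P \<noteq> 0" and "1 \<le> N"
  shows "F N w = 0"
  using \<open>1 \<le> N\<close>
proof (induction "N\<^sub>0 - N" arbitrary: N w rule: less_induct)
  case less
  show ?case
  proof (cases "N\<^sub>0 \<le> N")
    case False
    obtain c where c: "poly P c \<noteq> 0"
      using \<open>P \<noteq> 0\<close> poly_all_0_iff_0 by blast
    have "F (Suc N) (extend w c N) = 0"
      by (rule less.hyps) (use False in auto)
    then show ?thesis
      using extend[OF less.prems, of w c] c by simp
  qed (rule large)
qed

lemma neg_one_power_square: "(-1 :: 'a::comm_ring_1) ^ N * (-1) ^ N = 1"
  by (simp add: power_mult_distrib[symmetric])

context
  fixes w :: "nat \<Rightarrow> nat \<Rightarrow> 'a::comm_ring_1" and c :: 'a and N :: nat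
  assumes N: "1 \<le> N"
begin

lemma bilinear_f_extend:
  "bilinear_f (Suc N) (extend w c N) u v = poly (lin u * lin v) c * bilinear_f N w u v"
  unfolding bilinear_f_def casorati_f_extend casorati_g_extend[OF N]
  using neg_one_power_square[of N] by (simp add: algebra_simps)

lemma bilinear_h_extend:
  "bilinear_h (Suc N) (extend w c N) u v = poly (lin u * lin v) c * (bilinear_h N w u v + c * bilinear_f N w u v)"
  unfolding bilinear_h_def bilinear_f_def casorati_f_extend casorati_g_extend[OF N] casorati_h_extend[OF N]
  using neg_one_power_square[of N] by (simp add: algebra_simps power2_eq_square)

lemma bilinear_s_extend:
  "bilinear_s (Suc N) (extend w c N) u = poly (lin u) c * bilinear_s N w u"
  unfolding bilinear_s_def casorati_f_extend casorati_g_extend[OF N] casorati_h_extend[OF N]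
    casorati_s_extend[OF N]
  using neg_one_power_square[of N] by (simp add: algebra_simps power2_eq_square)

lemma bilinear_cubic_extend:
  "bilinear_cubic (Suc N) (extend w c N) u v e1 e2 e3
     = poly (cubic e1 e2 e3 * (lin u * lin v)) c * bilinear_cubic N w u v e1 e2 e3"
  unfolding bilinear_cubic_def Let_def casorati_f_extend casorati_g_extend[OF N] casorati_h_extend[OF N]
    casorati_s_extend[OF N]
  using neg_one_power_square[of N] by (simp add: algebra_simps power2_eq_square)

end

lemma bilinear_f_eq_0:
  fixes w :: "nat \<Rightarrow> nat \<Rightarrow> 'a::{idom,ring_char_0}"
  assumes "1 \<le> N"
  shows "bilinear_f N w u v = 0"
proof (rule vanishes_by_extension[where F = "\<lambda>N w. bilinear_f N w u v" and P = "lin u * lin v"])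
  show "bilinear_f N w u v = 0" if "2 \<le> N" for N and w :: "nat \<Rightarrow> nat \<Rightarrow> 'a"
    using bilinear_f_h_eq_0_add_2(1)[of "N - 2"] that by (simp only: le_add_diff_inverse2)
qed (use assms bilinear_f_extend in auto)

lemma bilinear_h_eq_0:
  fixes w :: "nat \<Rightarrow> nat \<Rightarrow> 'a::{idom,ring_char_0}"
  assumes "1 \<le> N"
  shows "bilinear_h N w u v = 0"
proof (rule vanishes_by_extension[where F = "\<lambda>N w. bilinear_h N w u v" and P = "lin u * lin v"])
  show "bilinear_h N w u v = 0" if "2 \<le> N" for N and w :: "nat \<Rightarrow> nat \<Rightarrow> 'a"
    using bilinear_f_h_eq_0_add_2(2)[of "N - 2"] that by (simp only: le_add_diff_inverse2)
  show "bilinear_h (Suc N) (extend w c N) u v = poly (lin u * lin v) c * bilinear_h N w u v"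
    if "1 \<le> N" for N c and w :: "nat \<Rightarrow> nat \<Rightarrow> 'a"
    using bilinear_h_extend[OF that, of w c u v] bilinear_f_eq_0[OF that, of w u v] by simp
qed (use assms in auto)

lemma bilinear_s_eq_0:
  fixes w :: "nat \<Rightarrow> nat \<Rightarrow> 'a::{idom,ring_char_0}"
  assumes "1 \<le> N"
  shows "bilinear_s N w u = 0"
proof (rule vanishes_by_extension[where F = "\<lambda>N w. bilinear_s N w u" and P = "lin u"])
  show "bilinear_s N w u = 0" if "2 \<le> N" for N and w :: "nat \<Rightarrow> nat \<Rightarrow> 'a"
    using bilinear_s_eq_0_add_2[of "N - 2"] that by (simp only: le_add_diff_inverse2)
qed (use assms bilinear_s_extend in auto)

lemma bilinear_cubic_eq_0:
  fixes w :: "nat \<Rightarrow> nat \<Rightarrow> 'a::{idom,ring_char_0}"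
  assumes "1 \<le> N"
  shows "bilinear_cubic N w u v e1 e2 e3 = 0"
proof (rule vanishes_by_extension[where F = "\<lambda>N w. bilinear_cubic N w u v e1 e2 e3"
      and P = "cubic e1 e2 e3 * (lin u * lin v)"])
  show "bilinear_cubic N w u v e1 e2 e3 = 0" if "4 \<le> N" for N and w :: "nat \<Rightarrow> nat \<Rightarrow> 'a"
    using bilinear_cubic_eq_0_add_4[where K = "N - 4"] that by (simp only: le_add_diff_inverse2)
qed (use assms bilinear_cubic_extend in auto)

section \<open>The Casoratians of the theorem\<close>

definition psi_seq ::
    "(nat \<Rightarrow> nat \<Rightarrow> complex) \<Rightarrow> (nat \<Rightarrow> nat \<Rightarrow> complex) \<Rightarrow> complex \<Rightarrow> complex \<Rightarrow> complex \<Rightarrow> complex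
      \<Rightarrow> int \<Rightarrow> int \<Rightarrow> int \<Rightarrow> int \<Rightarrow> nat \<Rightarrow> nat \<Rightarrow> complex" where
  "psi_seq \<rho> \<omega> p q a b n m \<alpha> \<beta> l i = psi \<rho> \<omega> p q a b (Suc i) n m \<alpha> \<beta> l"

lemma pcol_psi_seq:
  "pcol (psi_seq \<rho> \<omega> p q a b n m \<alpha> \<beta>) P i =
    (\<Sum>j\<in>{1..4}. \<rho> j (Suc i) * (p - \<omega> j (Suc i)) powi n * (q - \<omega> j (Suc i)) powi m
       * (a - \<omega> j (Suc i)) powi \<alpha> * (b - \<omega> j (Suc i)) powi \<beta> * poly P (- \<omega> j (Suc i)))"
  unfolding pcol_def psi_seq_def psi_def poly_altdef
  by (simp add: sum_distrib_left sum_distrib_right mult_ac sum.swap[of _ "{..degree P}"])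

lemma psi_shift:
  assumes "\<forall>j\<in>{1..4}. \<omega> j (Suc i) \<noteq> p \<and> \<omega> j (Suc i) \<noteq> q \<and> \<omega> j (Suc i) \<noteq> b"
  shows "psi \<rho> \<omega> p q a b (Suc i) (n + int i1) (m + int j1) \<alpha> (\<beta> + int k1) l
       = pcol (psi_seq \<rho> \<omega> p q a b n m \<alpha> \<beta>) (lin p ^ i1 * lin q ^ j1 * lin b ^ k1 * monom 1 l) i"
  unfolding pcol_psi_seq psi_def
proof (rule sum.cong[OF refl])
  fix j :: nat assume "j \<in> {1..4}"
  then have "p - \<omega> j (Suc i) \<noteq> 0" "q - \<omega> j (Suc i) \<noteq> 0" "b - \<omega> j (Suc i) \<noteq> 0"
    using assms by auto
  then show "\<rho> j (Suc i) * (- \<omega> j (Suc i)) ^ l * (p - \<omega> j (Suc i)) powi (n + int i1)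
      * (q - \<omega> j (Suc i)) powi (m + int j1) * (a - \<omega> j (Suc i)) powi \<alpha> * (b - \<omega> j (Suc i)) powi (\<beta> + int k1)
    = \<rho> j (Suc i) * (p - \<omega> j (Suc i)) powi n * (q - \<omega> j (Suc i)) powi m * (a - \<omega> j (Suc i)) powi \<alpha>
      * (b - \<omega> j (Suc i)) powi \<beta> * poly (lin p ^ i1 * lin q ^ j1 * lin b ^ k1 * monom 1 l) (- \<omega> j (Suc i))"
    by (simp add: power_int_add poly_monom)
qed

lemma casor_eq_casorati:
  assumes "\<forall>s\<in>{1..N}. \<forall>j\<in>{1..4}. \<omega> j s \<noteq> p \<and> \<omega> j s \<noteq> q \<and> \<omega> j s \<noteq> b"
  shows "casor N \<rho> \<omega> p q a b (n + int i1) (m + int j1) \<alpha> (\<beta> + int k1) ls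
       = casorati N (psi_seq \<rho> \<omega> p q a b n m \<alpha> \<beta>) (lin p ^ i1 * lin q ^ j1 * lin b ^ k1) ls"
proof (cases "length ls = N")
  case True
  have "psi \<rho> \<omega> p q a b (Suc i) (n + int i1) (m + int j1) \<alpha> (\<beta> + int k1) (ls ! j)
      = pcol (psi_seq \<rho> \<omega> p q a b n m \<alpha> \<beta>) (lin p ^ i1 * lin q ^ j1 * lin b ^ k1 * monom 1 (ls ! j)) i"
    if "i < N" for i j
    using that assms by (intro psi_shift) auto
  then show ?thesis
    unfolding casor_def casorati_def pdet_def col_det_def using True
    by (auto intro!: arg_cong[where f = det] eq_matI)
qed (simp add: casor_def casorati_def)

lemma G_cocycle: "G \<alpha>1 \<alpha>2 \<alpha>3 x z = G \<alpha>1 \<alpha>2 \<alpha>3 x y + G \<alpha>1 \<alpha>2 \<alpha>3 y z"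
  unfolding G_def by (simp add: algebra_simps)

definition dispersion_cubic :: "complex \<Rightarrow> complex \<Rightarrow> complex \<Rightarrow> complex \<Rightarrow> complex poly" where
  "dispersion_cubic \<alpha>1 \<alpha>2 \<alpha>3 b = cubic (\<alpha>3 - b) (b\<^sup>2 - \<alpha>3 * b + \<alpha>2) (\<alpha>1 - \<alpha>2 * b + \<alpha>3 * b\<^sup>2 - b ^ 3)"

lemma poly_dispersion_cubic: "poly (lin b * dispersion_cubic \<alpha>1 \<alpha>2 \<alpha>3 b) x = G \<alpha>1 \<alpha>2 \<alpha>3 x (- b)"
  unfolding dispersion_cubic_def cubic_def G_def
  by (simp add: algebra_simps power2_eq_square power3_eq_cube eval_nat_numeral)

text \<open>On row \<open>s\<close> all four exponentials share the value \<open>G(-\<omega>\<^sub>j(k\<^sub>s), -b) = G(-k\<^sub>s, -b)\<close>, so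
  multiplication by \<open>(x + b) Q\<^sub>b\<close> only rescales the rows.\<close>
lemma pcol_psi_seq_dispersion:
  assumes roots: "\<forall>x. G \<alpha>1 \<alpha>2 \<alpha>3 (- x) (- k (Suc i)) = (\<Prod>j\<in>{1..4}. x - \<omega> j (Suc i))"
  shows "pcol (psi_seq \<rho> \<omega> p q a b n m \<alpha> \<beta>) (lin b * dispersion_cubic \<alpha>1 \<alpha>2 \<alpha>3 b * P) i
       = G \<alpha>1 \<alpha>2 \<alpha>3 (- k (Suc i)) (- b) * pcol (psi_seq \<rho> \<omega> p q a b n m \<alpha> \<beta>) P i"
proof -
  have "G \<alpha>1 \<alpha>2 \<alpha>3 (- \<omega> j (Suc i)) (- b) = G \<alpha>1 \<alpha>2 \<alpha>3 (- k (Suc i)) (- b)" if "j \<in> {1..4}" for j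
  proof -
    have "G \<alpha>1 \<alpha>2 \<alpha>3 (- \<omega> j (Suc i)) (- k (Suc i)) = 0"
      using roots that by (auto intro: prod_zero)
    then show ?thesis using G_cocycle[of \<alpha>1 \<alpha>2 \<alpha>3 "- \<omega> j (Suc i)" "- b" "- k (Suc i)"] by simp
  qed
  then show ?thesis
    unfolding pcol_psi_seq poly_mult[of "lin b * dispersion_cubic \<alpha>1 \<alpha>2 \<alpha>3 b"] poly_dispersion_cubic
    by (simp add: sum_distrib_left mult_ac)
qed

lemma G_root_nonzero:
  fixes \<omega> :: "nat \<Rightarrow> nat \<Rightarrow> complex"
  assumes "\<forall>x. G \<alpha>1 \<alpha>2 \<alpha>3 (- x) (- k s) = (\<Prod>j\<in>{1..4}. x - \<omega> j s)" "\<forall>j\<in>{1..4}. \<omega> j s \<noteq> b"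
  shows "G \<alpha>1 \<alpha>2 \<alpha>3 (- k s) (- b) \<noteq> 0"
proof -
  have "G \<alpha>1 \<alpha>2 \<alpha>3 (- b) (- k s) \<noteq> 0"
    using assms by (auto simp: prod_zero_iff)
  then show ?thesis by (simp add: G_def algebra_simps)
qed

lemma G_div_eq_poly_dispersion_cubic:
  assumes "p \<noteq> b"
  shows "G \<alpha>1 \<alpha>2 \<alpha>3 (- p) (- b) / (p - b) = - poly (dispersion_cubic \<alpha>1 \<alpha>2 \<alpha>3 b) (- p)"
proof -
  have "G \<alpha>1 \<alpha>2 \<alpha>3 (- p) (- b) = - ((p - b) * poly (dispersion_cubic \<alpha>1 \<alpha>2 \<alpha>3 b) (- p))"
    using poly_dispersion_cubic[of b \<alpha>1 \<alpha>2 \<alpha>3 "- p"] by (simp add: algebra_simps)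
  then show ?thesis using assms by simp
qed

text \<open>Shifting \<open>\<beta>\<close> by one turns \<open>w\<close> into \<open>w'\<close>; the undotted Casoratians become Casoratians
  of \<open>w'\<close> with the cubic factor, to which the cubic identity applies.\<close>
lemma casorati_dispersion_identity:
  fixes w :: "nat \<Rightarrow> nat \<Rightarrow> complex"
  assumes N: "1 \<le> N" and "p \<noteq> b" "q \<noteq> b"
    and disp: "\<And>i P. i < N \<Longrightarrow> pcol w (lin b * dispersion_cubic \<alpha>1 \<alpha>2 \<alpha>3 b * P) i = d i * pcol w P i"
    and d: "\<And>i. i < N \<Longrightarrow> d i \<noteq> 0"
  defines "f \<equiv> casorati_f N w" and "g \<equiv> casorati_g N w" and "h \<equiv> casorati_h N w" and "s \<equiv> casorati_s N w"
    and "B \<equiv> lin p * lin q * lin b"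
  shows "(H \<alpha>2 \<alpha>3 p q * f 1 * f B + s 1 * f B + (p + q - \<alpha>3) * g 1 * f B
        - ((p + q - \<alpha>3) * f 1 + g 1) * (g B - b * f B) + f 1 * (h B - b * g B + b\<^sup>2 * f B)) * (p - q)
      - G \<alpha>1 \<alpha>2 \<alpha>3 (- p) (- b) / (p - b) * f (lin p) * f (lin q * lin b)
      + G \<alpha>1 \<alpha>2 \<alpha>3 (- q) (- b) / (q - b) * f (lin q) * f (lin p * lin b) = 0"
    (is "?L = 0")
proof -
  define Q where "Q = dispersion_cubic \<alpha>1 \<alpha>2 \<alpha>3 b"
  define w' where "w' = (\<lambda>l. pcol w (lin b * monom 1 l))"
  define P where "P = (\<Prod>i<N. d i)"
  have "P \<noteq> 0" using d by (simp add: P_def)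
  have shift: "casorati N w' D ls = casorati N w (lin b * D) ls" for D ls
    unfolding w'_def by (rule casorati_pcol_shift)
  have scale: "casorati N w (lin b * Q * D) ls = P * casorati N w D ls" for D ls
    unfolding P_def Q_def by (rule casorati_scale_rows) (use disp in simp)
  have scale_lin: "casorati N w (lin b * (lin u * Q)) ls = P * casorati N w (lin u) ls" for u ls
    using scale[of "lin u" ls] by (simp add: mult_ac)
  have comm: "lin b * (lin p * lin q) = B" "lin b * lin p = lin p * lin b" "lin b * lin q = lin q * lin b"
    by (simp_all add: B_def mult_ac)
  have "P * ?L = bilinear_cubic N w' p q (\<alpha>3 - b) (b\<^sup>2 - \<alpha>3 * b + \<alpha>2) (\<alpha>1 - \<alpha>2 * b + \<alpha>3 * b\<^sup>2 - b ^ 3)"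
    unfolding bilinear_cubic_def Let_def f_def g_def h_def s_def casorati_f_def casorati_g_def casorati_h_def
      casorati_s_def shift dispersion_cubic_def[symmetric] Q_def[symmetric]
      scale[of 1, simplified] scale_lin comm
      G_div_eq_poly_dispersion_cubic[OF \<open>p \<noteq> b\<close>] G_div_eq_poly_dispersion_cubic[OF \<open>q \<noteq> b\<close>]
    by (simp add: Q_def H_def algebra_simps power2_eq_square)
  also have "\<dots> = 0"
    by (rule bilinear_cubic_eq_0[OF N])
  finally show ?thesis using \<open>P \<noteq> 0\<close> by simp
qed

theorem theorem4p3:
  fixes \<alpha>1 \<alpha>2 \<alpha>3 p q a b :: complex
    and N :: nat and k :: "nat \<Rightarrow> complex"
    and \<omega> \<rho> :: "nat \<Rightarrow> nat \<Rightarrow> complex"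
    and \<alpha> n m \<beta> :: int
  assumes dist: "distinct [p, q, a, b]"
    and N: "N \<ge> 1"
    and roots: "\<forall>s\<in>{1..N}. \<forall>x. G \<alpha>1 \<alpha>2 \<alpha>3 (- x) (- k s) = (\<Prod>j\<in>{1..4}. (x - \<omega> j s))"
    and om4: "\<forall>s\<in>{1..N}. \<omega> 4 s = k s"
    and nz: "\<forall>s\<in>{1..N}. \<forall>j\<in>{1..4}. \<omega> j s \<noteq> p \<and> \<omega> j s \<noteq> q \<and> \<omega> j s \<noteq> a \<and> \<omega> j s \<noteq> b"
  defines "f \<equiv> \<lambda>n m \<beta>. casor N \<rho> \<omega> p q a b n m \<alpha> \<beta> [0..<N]"
    and "g \<equiv> \<lambda>n m \<beta>. casor N \<rho> \<omega> p q a b n m \<alpha> \<beta> ([0..<N - 1] @ [N])"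
    and "h \<equiv> \<lambda>n m \<beta>. casor N \<rho> \<omega> p q a b n m \<alpha> \<beta> ([0..<N - 1] @ [N + 1])"
    and "sc \<equiv> \<lambda>n m \<beta>. casor N \<rho> \<omega> p q a b n m \<alpha> \<beta> ([0..<N - 2] @ [N - 1, N])"
    and "pb \<equiv> G \<alpha>1 \<alpha>2 \<alpha>3 (- p) (- b) / (p - b)"
    and "qb \<equiv> G \<alpha>1 \<alpha>2 \<alpha>3 (- q) (- b) / (q - b)"
  shows
    "f (n+1) m \<beta> * (p * f n m (\<beta>+1) + g n m (\<beta>+1)) - (p - b) * f n m \<beta> * f (n+1) m (\<beta>+1)
       - (b * f (n+1) m \<beta> + g (n+1) m \<beta>) * f n m (\<beta>+1) = 0
   \<and> f n (m+1) \<beta> * (q * f n m (\<beta>+1) + g n m (\<beta>+1)) - (q - b) * f n m \<beta> * f n (m+1) (\<beta>+1)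
       - (b * f n (m+1) \<beta> + g n (m+1) \<beta>) * f n m (\<beta>+1) = 0
   \<and> f (n+1) m \<beta> * (b^2 * f n m (\<beta>+1) - b * g n m (\<beta>+1) + h n m (\<beta>+1))
       + p * f (n+1) m \<beta> * (g n m (\<beta>+1) - b * f n m (\<beta>+1))
       - (p - b) * f n m \<beta> * (g (n+1) m (\<beta>+1) - b * f (n+1) m (\<beta>+1))
       - f n m (\<beta>+1) * h (n+1) m \<beta> = 0
   \<and> f n (m+1) \<beta> * (b^2 * f n m (\<beta>+1) - b * g n m (\<beta>+1) + h n m (\<beta>+1))
       + q * f n (m+1) \<beta> * (g n m (\<beta>+1) - b * f n m (\<beta>+1))
       - (q - b) * f n m \<beta> * (g n (m+1) (\<beta>+1) - b * f n (m+1) (\<beta>+1))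
       - f n m (\<beta>+1) * h n (m+1) \<beta> = 0
   \<and> f (n+1) m \<beta> * (p * g n m \<beta> + h n m \<beta>) - g (n+1) m \<beta> * (p * f n m \<beta> + g n m \<beta>)
       + f n m \<beta> * sc (n+1) m \<beta> = 0
   \<and> f n (m+1) \<beta> * (q * g n m \<beta> + h n m \<beta>) - g n (m+1) \<beta> * (q * f n m \<beta> + g n m \<beta>)
       + f n m \<beta> * sc n (m+1) \<beta> = 0
   \<and> (p - q) * (f (n+1) m \<beta> * f n (m+1) \<beta> - f n m \<beta> * f (n+1) (m+1) \<beta>)
       + f (n+1) m \<beta> * g n (m+1) \<beta> - f n (m+1) \<beta> * g (n+1) m \<beta> = 0
   \<and> (H \<alpha>2 \<alpha>3 p q * f n m \<beta> * f (n+1) (m+1) (\<beta>+1) + sc n m \<beta> * f (n+1) (m+1) (\<beta>+1)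
        + (p + q - \<alpha>3) * g n m \<beta> * f (n+1) (m+1) (\<beta>+1)
        - ((p + q - \<alpha>3) * f n m \<beta> + g n m \<beta>) * (g (n+1) (m+1) (\<beta>+1) - b * f (n+1) (m+1) (\<beta>+1))
        + f n m \<beta> * (h (n+1) (m+1) (\<beta>+1) - b * g (n+1) (m+1) (\<beta>+1) + b^2 * f (n+1) (m+1) (\<beta>+1)))
       * (p - q)
     - pb * f (n+1) m \<beta> * f n (m+1) (\<beta>+1) + qb * f n (m+1) \<beta> * f (n+1) m (\<beta>+1) = 0"
proof -
  define W where "W = psi_seq \<rho> \<omega> p q a b n m \<alpha> \<beta>"
  have "p \<noteq> b" "q \<noteq> b" using dist by auto
  have cas: "casor N \<rho> \<omega> p q a b (n + int i) (m + int j) \<alpha> (\<beta> + int l) ls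
      = casorati N W (lin p ^ i * lin q ^ j * lin b ^ l) ls" for i j l ls
    unfolding W_def by (rule casor_eq_casorati) (use nz in blast)
  have disp: "pcol W (lin b * dispersion_cubic \<alpha>1 \<alpha>2 \<alpha>3 b * P) i = G \<alpha>1 \<alpha>2 \<alpha>3 (- k (Suc i)) (- b) * pcol W P i"
    if "i < N" for i P
    unfolding W_def by (rule pcol_psi_seq_dispersion) (use roots that in auto)
  have G_nonzero: "G \<alpha>1 \<alpha>2 \<alpha>3 (- k (Suc i)) (- b) \<noteq> 0" if "i < N" for i
    by (rule G_root_nonzero) (use roots nz that in auto)
  note identities = bilinear_f_eq_0[OF N, of W p b] bilinear_f_eq_0[OF N, of W q b]
    bilinear_h_eq_0[OF N, of W p b] bilinear_h_eq_0[OF N, of W q b]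
    bilinear_s_eq_0[OF N, of W p] bilinear_s_eq_0[OF N, of W q] bilinear_f_eq_0[OF N, of W p q]
    casorati_dispersion_identity[OF N \<open>p \<noteq> b\<close> \<open>q \<noteq> b\<close> disp G_nonzero]
  show ?thesis
    using identities
    unfolding f_def g_def h_def sc_def pb_def qb_def bilinear_f_def bilinear_h_def bilinear_s_def
      casorati_f_def casorati_g_def casorati_h_def casorati_s_def
      cas[of 0 0 0, simplified] cas[of 1 0 0, simplified] cas[of 0 1 0, simplified] cas[of 0 0 1, simplified]
      cas[of 1 1 0, simplified] cas[of 1 0 1, simplified] cas[of 0 1 1, simplified] cas[of 1 1 1, simplified]
    by (simp add: algebra_simps)
qed

end
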